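(* Every regular coherent group is torsionfree.
   Context: A ring is regular if it is Noetherian and every finitely generated module has a finite-dimensional resolution by finitely generated projective modules; it is regular coherent if every finitely presented module has a finite-dimensional resolution by finitely generated projective modules. A group $G$ is regular coherent if the group ring $RG$ is regular coherent for every regular ring $R$. *)

theory Defs
  imports "HOL-Algebra.Module"
begin

definition left_module :: "('a, 'c) ring_scheme \<Rightarrow> ('a, 'b, 'd) module_scheme \<Rightarrow> bool" where
  "left_module R M \<longleftrightarrow> ring R \<and> abelian_group M \<and>
     (\<forall>a\<in>carrier R. \<forall>x\<in>carrier M. a \<odot>\<^bsub>M\<^esub> x \<in> carrier M) \<and>
     (\<forall>a\<in>carrier R. \<forall>b\<in>carrier R. \<forall>x\<in>carrier M.
        (a \<oplus>\<^bsub>R\<^esub> b) \<odot>\<^bsub>M\<^esub> x = a \<odot>\<^bsub>M\<^esub> x \<oplus>\<^bsub>M\<^esub> b \<odot>\<^bsub>M\<^esub> x) \<and>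
     (\<forall>a\<in>carrier R. \<forall>x\<in>carrier M. \<forall>y\<in>carrier M.
        a \<odot>\<^bsub>M\<^esub> (x \<oplus>\<^bsub>M\<^esub> y) = a \<odot>\<^bsub>M\<^esub> x \<oplus>\<^bsub>M\<^esub> a \<odot>\<^bsub>M\<^esub> y) \<and>
     (\<forall>a\<in>carrier R. \<forall>b\<in>carrier R. \<forall>x\<in>carrier M.
        (a \<otimes>\<^bsub>R\<^esub> b) \<odot>\<^bsub>M\<^esub> x = a \<odot>\<^bsub>M\<^esub> (b \<odot>\<^bsub>M\<^esub> x)) \<and>
     (\<forall>x\<in>carrier M. \<one>\<^bsub>R\<^esub> \<odot>\<^bsub>M\<^esub> x = x)"

definition lin_hom :: "('a, 'c) ring_scheme \<Rightarrow> ('a, 'b, 'd) module_scheme \<Rightarrow> ('a, 'e, 'f) module_scheme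
                         \<Rightarrow> ('b \<Rightarrow> 'e) set" where
  "lin_hom R M N = {f. f \<in> carrier M \<rightarrow> carrier N \<and>
     (\<forall>x\<in>carrier M. \<forall>y\<in>carrier M. f (x \<oplus>\<^bsub>M\<^esub> y) = f x \<oplus>\<^bsub>N\<^esub> f y) \<and>
     (\<forall>a\<in>carrier R. \<forall>x\<in>carrier M. f (a \<odot>\<^bsub>M\<^esub> x) = a \<odot>\<^bsub>N\<^esub> f x)}"

definition lin_kernel :: "('a, 'b, 'd) module_scheme \<Rightarrow> ('a, 'e, 'f) module_scheme \<Rightarrow> ('b \<Rightarrow> 'e) \<Rightarrow> 'b set" where
  "lin_kernel M N f = {x \<in> carrier M. f x = \<zero>\<^bsub>N\<^esub>}"

definition free_mod :: "('a, 'c) ring_scheme \<Rightarrow> nat \<Rightarrow> ('a, nat \<Rightarrow> 'a) module" where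
  "free_mod R n =
     \<lparr>carrier = {v. (\<forall>i<n. v i \<in> carrier R) \<and> (\<forall>i\<ge>n. v i = \<zero>\<^bsub>R\<^esub>)},
      mult = (\<lambda>_ _. undefined), one = undefined,
      zero = (\<lambda>_. \<zero>\<^bsub>R\<^esub>),
      add = (\<lambda>u v i. if i < n then u i \<oplus>\<^bsub>R\<^esub> v i else \<zero>\<^bsub>R\<^esub>),
      smult = (\<lambda>a v i. if i < n then a \<otimes>\<^bsub>R\<^esub> v i else \<zero>\<^bsub>R\<^esub>)\<rparr>"

text \<open>Finitely generated projective = direct summand (retract) of some R^n.\<close>
definition fg_projective :: "('a, 'c) ring_scheme \<Rightarrow> ('a, 'b, 'd) module_scheme \<Rightarrow> bool" where
  "fg_projective R P \<longleftrightarrow> left_module R P \<and>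
     (\<exists>n i p. i \<in> lin_hom R P (free_mod R n) \<and> p \<in> lin_hom R (free_mod R n) P \<and>
              (\<forall>x\<in>carrier P. p (i x) = x))"

definition fin_generated :: "('a, 'c) ring_scheme \<Rightarrow> ('a, 'b, 'd) module_scheme \<Rightarrow> bool" where
  "fin_generated R M \<longleftrightarrow> left_module R M \<and>
     (\<exists>n f. f \<in> lin_hom R (free_mod R n) M \<and> f ` carrier (free_mod R n) = carrier M)"

definition fin_presented :: "('a, 'c) ring_scheme \<Rightarrow> ('a, 'b, 'd) module_scheme \<Rightarrow> bool" where
  "fin_presented R M \<longleftrightarrow> left_module R M \<and>
     (\<exists>n m f g. f \<in> lin_hom R (free_mod R n) M \<and> f ` carrier (free_mod R n) = carrier M \<and>
        g \<in> lin_hom R (free_mod R m) (free_mod R n) \<and>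
        g ` carrier (free_mod R m) = lin_kernel (free_mod R n) M f)"

text \<open>M has a finite-dimensional resolution
  0 \<rightarrow> P_k \<rightarrow> ... \<rightarrow> P_1 \<rightarrow> P_0 \<rightarrow> M \<rightarrow> 0 by finitely generated projective modules
  (encoded as an exact sequence indexed by all naturals with P_i = 0 for i > k).
  Every f.g. projective module is isomorphic to a submodule of some R^n, so the
  modules P_i are taken with carrier type nat \<Rightarrow> 'a.\<close>
definition has_fin_proj_res :: "('a, 'c) ring_scheme \<Rightarrow> ('a, 'b, 'd) module_scheme \<Rightarrow> bool" where
  "has_fin_proj_res R M \<longleftrightarrow>
     (\<exists>(P :: nat \<Rightarrow> ('a, nat \<Rightarrow> 'a) module) d \<epsilon> (k::nat).
        (\<forall>i. fg_projective R (P i)) \<and>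
        (\<forall>i>k. carrier (P i) = {\<zero>\<^bsub>P i\<^esub>}) \<and>
        (\<forall>i. d i \<in> lin_hom R (P (Suc i)) (P i)) \<and>
        \<epsilon> \<in> lin_hom R (P 0) M \<and> \<epsilon> ` carrier (P 0) = carrier M \<and>
        lin_kernel (P 0) M \<epsilon> = d 0 ` carrier (P 1) \<and>
        (\<forall>i. lin_kernel (P (Suc i)) (P i) (d i) = d (Suc i) ` carrier (P (Suc (Suc i)))))"

definition left_ideal :: "('a, 'c) ring_scheme \<Rightarrow> 'a set \<Rightarrow> bool" where
  "left_ideal R I \<longleftrightarrow> I \<subseteq> carrier R \<and> \<zero>\<^bsub>R\<^esub> \<in> I \<and>
     (\<forall>x\<in>I. \<forall>y\<in>I. x \<oplus>\<^bsub>R\<^esub> y \<in> I) \<and> (\<forall>x\<in>I. \<ominus>\<^bsub>R\<^esub> x \<in> I) \<and>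
     (\<forall>r\<in>carrier R. \<forall>x\<in>I. r \<otimes>\<^bsub>R\<^esub> x \<in> I)"

definition noetherian_ring :: "('a, 'c) ring_scheme \<Rightarrow> bool" where
  "noetherian_ring R \<longleftrightarrow> ring R \<and>
     (\<forall>I :: nat \<Rightarrow> 'a set. (\<forall>n. left_ideal R (I n)) \<and> (\<forall>n. I n \<subseteq> I (Suc n)) \<longrightarrow>
        (\<exists>N. \<forall>n\<ge>N. I n = I N))"

text \<open>Modules quantified over carry carrier type (nat \<Rightarrow> 'a) set; every finitely
  generated module is isomorphic to such a one (a quotient of R^n, elements = cosets).\<close>
definition regular_ring :: "('a, 'c) ring_scheme \<Rightarrow> bool" where
  "regular_ring R \<longleftrightarrow> noetherian_ring R \<and>
     (\<forall>M :: ('a, (nat \<Rightarrow> 'a) set) module. fin_generated R M \<longrightarrow> has_fin_proj_res R M)"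

definition regular_coherent_ring :: "('a, 'c) ring_scheme \<Rightarrow> bool" where
  "regular_coherent_ring R \<longleftrightarrow> ring R \<and>
     (\<forall>M :: ('a, (nat \<Rightarrow> 'a) set) module. fin_presented R M \<longrightarrow> has_fin_proj_res R M)"

definition group_ring :: "('a, 'c) ring_scheme \<Rightarrow> ('g, 'e) monoid_scheme \<Rightarrow> ('g \<Rightarrow> 'a) ring" where
  "group_ring R G =
     \<lparr>carrier = {f. (\<forall>x\<in>carrier G. f x \<in> carrier R) \<and> (\<forall>x. x \<notin> carrier G \<longrightarrow> f x = \<zero>\<^bsub>R\<^esub>)
                    \<and> finite {x. f x \<noteq> \<zero>\<^bsub>R\<^esub>}},
      mult = (\<lambda>f h x. if x \<in> carrier G
                 then finsum R (\<lambda>y. f y \<otimes>\<^bsub>R\<^esub> h (inv\<^bsub>G\<^esub> y \<otimes>\<^bsub>G\<^esub> x)) {y \<in> carrier G. f y \<noteq> \<zero>\<^bsub>R\<^esub>}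
                 else \<zero>\<^bsub>R\<^esub>),
      one = (\<lambda>x. if x = \<one>\<^bsub>G\<^esub> then \<one>\<^bsub>R\<^esub> else \<zero>\<^bsub>R\<^esub>),
      zero = (\<lambda>_. \<zero>\<^bsub>R\<^esub>),
      add = (\<lambda>f h x. if x \<in> carrier G then f x \<oplus>\<^bsub>R\<^esub> h x else \<zero>\<^bsub>R\<^esub>)\<rparr>"

definition regular_coherent_group :: "'r itself \<Rightarrow> ('g, 'e) monoid_scheme \<Rightarrow> bool" where
  "regular_coherent_group _ G \<longleftrightarrow>
     (\<forall>R :: 'r ring. regular_ring R \<longrightarrow> regular_coherent_ring (group_ring R G))"

definition torsionfree :: "('g, 'e) monoid_scheme \<Rightarrow> bool" where
  "torsionfree G \<longleftrightarrow>
     (\<forall>g\<in>carrier G. (\<exists>n::nat. n > 0 \<and> g [^]\<^bsub>G\<^esub> n = \<one>\<^bsub>G\<^esub>) \<longrightarrow> g = \<one>\<^bsub>G\<^esub>)"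

end

theory Submission
  imports Defs "HOL-Number_Theory.Residues" "HOL-Algebra.QuotRing"
begin

text \<open>If \<open>G\<close> has torsion, it has an element \<open>h\<close> of prime order \<open>p\<close>. Let \<open>R = \<int>/p\<close>, a finite
  field and hence regular, and \<open>A = RG\<close>. For \<open>u = h - 1\<close> and \<open>N = 1 + h + \<dots> + h\<^bsup>p-1\<^esup>\<close> one has
  \<open>uN = Nu = 0\<close>, and in \<open>A\<close> the elements killed by \<open>u\<close> are the multiples of \<open>N\<close> and vice versa.
  This exactness passes to finitely generated projective modules and, by a diagram chase down
  a finite projective resolution, to every module that has one. The finitely presented module
  \<open>A/Au\<close> violates it: the class of \<open>1\<close> is killed by \<open>u\<close> but is not a multiple of \<open>N\<close>, since
  the augmentation \<open>A \<rightarrow> R\<close> kills \<open>u\<close> and \<open>N\<close> but not \<open>1\<close>.\<close>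

lemma left_moduleD:
  assumes "left_module R M"
  shows left_module_ring: "ring R"
    and left_module_abelian_group: "abelian_group M"
    and left_module_smult_closed:
      "\<And>a x. a \<in> carrier R \<Longrightarrow> x \<in> carrier M \<Longrightarrow> a \<odot>\<^bsub>M\<^esub> x \<in> carrier M"
    and left_module_l_distr: "\<And>a b x. a \<in> carrier R \<Longrightarrow> b \<in> carrier R \<Longrightarrow> x \<in> carrier M \<Longrightarrow>
        (a \<oplus>\<^bsub>R\<^esub> b) \<odot>\<^bsub>M\<^esub> x = a \<odot>\<^bsub>M\<^esub> x \<oplus>\<^bsub>M\<^esub> b \<odot>\<^bsub>M\<^esub> x"
    and left_module_r_distr: "\<And>a x y. a \<in> carrier R \<Longrightarrow> x \<in> carrier M \<Longrightarrow> y \<in> carrier M \<Longrightarrow>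
        a \<odot>\<^bsub>M\<^esub> (x \<oplus>\<^bsub>M\<^esub> y) = a \<odot>\<^bsub>M\<^esub> x \<oplus>\<^bsub>M\<^esub> a \<odot>\<^bsub>M\<^esub> y"
    and left_module_smult_assoc: "\<And>a b x. a \<in> carrier R \<Longrightarrow> b \<in> carrier R \<Longrightarrow> x \<in> carrier M \<Longrightarrow>
        (a \<otimes>\<^bsub>R\<^esub> b) \<odot>\<^bsub>M\<^esub> x = a \<odot>\<^bsub>M\<^esub> (b \<odot>\<^bsub>M\<^esub> x)"
  using assms unfolding left_module_def by auto

lemma left_module_smult_zero:
  assumes M: "left_module R M" and a: "a \<in> carrier R"
  shows "a \<odot>\<^bsub>M\<^esub> \<zero>\<^bsub>M\<^esub> = \<zero>\<^bsub>M\<^esub>"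
proof -
  interpret M: abelian_group M using left_module_abelian_group[OF M] .
  have "a \<odot>\<^bsub>M\<^esub> \<zero>\<^bsub>M\<^esub> \<oplus>\<^bsub>M\<^esub> a \<odot>\<^bsub>M\<^esub> \<zero>\<^bsub>M\<^esub> = a \<odot>\<^bsub>M\<^esub> \<zero>\<^bsub>M\<^esub> \<oplus>\<^bsub>M\<^esub> \<zero>\<^bsub>M\<^esub>"
    using left_module_r_distr[OF M a, of "\<zero>\<^bsub>M\<^esub>" "\<zero>\<^bsub>M\<^esub>"] left_module_smult_closed[OF M a] by simp
  then show ?thesis
    using left_module_smult_closed[OF M a] by (simp add: M.add.l_cancel_one)
qed

lemma left_module_zero_smult:
  assumes M: "left_module R M" and x: "x \<in> carrier M"
  shows "\<zero>\<^bsub>R\<^esub> \<odot>\<^bsub>M\<^esub> x = \<zero>\<^bsub>M\<^esub>"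
proof -
  interpret M: abelian_group M using left_module_abelian_group[OF M] .
  interpret R: ring R using left_module_ring[OF M] .
  have "\<zero>\<^bsub>R\<^esub> \<odot>\<^bsub>M\<^esub> x \<oplus>\<^bsub>M\<^esub> \<zero>\<^bsub>R\<^esub> \<odot>\<^bsub>M\<^esub> x = \<zero>\<^bsub>R\<^esub> \<odot>\<^bsub>M\<^esub> x \<oplus>\<^bsub>M\<^esub> \<zero>\<^bsub>M\<^esub>"
    using left_module_l_distr[OF M R.zero_closed R.zero_closed x]
      left_module_smult_closed[OF M R.zero_closed x] by simp
  then show ?thesis
    using left_module_smult_closed[OF M R.zero_closed x] by (simp add: M.add.l_cancel_one)
qed

lemma left_module_smult_diff:
  assumes M: "left_module R M" and a: "a \<in> carrier R" and x: "x \<in> carrier M" and y: "y \<in> carrier M"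
  shows "a \<odot>\<^bsub>M\<^esub> (x \<ominus>\<^bsub>M\<^esub> y) = a \<odot>\<^bsub>M\<^esub> x \<ominus>\<^bsub>M\<^esub> a \<odot>\<^bsub>M\<^esub> y"
proof -
  interpret M: abelian_group M using left_module_abelian_group[OF M] .
  have "a \<odot>\<^bsub>M\<^esub> (\<ominus>\<^bsub>M\<^esub> y) \<oplus>\<^bsub>M\<^esub> a \<odot>\<^bsub>M\<^esub> y = \<zero>\<^bsub>M\<^esub>"
    using left_module_r_distr[OF M a, of "\<ominus>\<^bsub>M\<^esub> y" y] left_module_smult_zero[OF M a] y
    by (simp add: M.l_neg)
  then have "a \<odot>\<^bsub>M\<^esub> (\<ominus>\<^bsub>M\<^esub> y) = \<ominus>\<^bsub>M\<^esub> (a \<odot>\<^bsub>M\<^esub> y)"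
    using left_module_smult_closed[OF M a] y by (simp add: M.minus_equality)
  then show ?thesis
    using left_module_r_distr[OF M a x, of "\<ominus>\<^bsub>M\<^esub> y"] y by (simp add: M.minus_eq)
qed

lemma lin_homD:
  assumes "f \<in> lin_hom R M N"
  shows lin_hom_closed: "\<And>x. x \<in> carrier M \<Longrightarrow> f x \<in> carrier N"
    and lin_hom_add: "\<And>x y. x \<in> carrier M \<Longrightarrow> y \<in> carrier M \<Longrightarrow> f (x \<oplus>\<^bsub>M\<^esub> y) = f x \<oplus>\<^bsub>N\<^esub> f y"
    and lin_hom_smult: "\<And>a x. a \<in> carrier R \<Longrightarrow> x \<in> carrier M \<Longrightarrow> f (a \<odot>\<^bsub>M\<^esub> x) = a \<odot>\<^bsub>N\<^esub> f x"
  using assms unfolding lin_hom_def by auto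

lemma lin_hom_zero:
  assumes f: "f \<in> lin_hom R M N" and "abelian_group M" "abelian_group N"
  shows "f \<zero>\<^bsub>M\<^esub> = \<zero>\<^bsub>N\<^esub>"
proof -
  interpret M: abelian_group M by fact
  interpret N: abelian_group N by fact
  have "f \<zero>\<^bsub>M\<^esub> \<oplus>\<^bsub>N\<^esub> f \<zero>\<^bsub>M\<^esub> = f \<zero>\<^bsub>M\<^esub> \<oplus>\<^bsub>N\<^esub> \<zero>\<^bsub>N\<^esub>"
    using lin_hom_add[OF f, of "\<zero>\<^bsub>M\<^esub>" "\<zero>\<^bsub>M\<^esub>"] lin_hom_closed[OF f] by simp
  then show ?thesis using lin_hom_closed[OF f] by (simp add: N.add.l_cancel_one)
qed

lemma lin_hom_diff:
  assumes f: "f \<in> lin_hom R M N" and "abelian_group M" "abelian_group N"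
    and x: "x \<in> carrier M" and y: "y \<in> carrier M"
  shows "f (x \<ominus>\<^bsub>M\<^esub> y) = f x \<ominus>\<^bsub>N\<^esub> f y"
proof -
  interpret M: abelian_group M by fact
  interpret N: abelian_group N by fact
  have "f (\<ominus>\<^bsub>M\<^esub> y) \<oplus>\<^bsub>N\<^esub> f y = \<zero>\<^bsub>N\<^esub>"
    using lin_hom_add[OF f, of "\<ominus>\<^bsub>M\<^esub> y" y] lin_hom_zero[OF assms(1-3)] y by (simp add: M.l_neg)
  then have "f (\<ominus>\<^bsub>M\<^esub> y) = \<ominus>\<^bsub>N\<^esub> (f y)"
    using N.minus_equality lin_hom_closed[OF f] y by simp
  then show ?thesis using lin_hom_add[OF f x, of "\<ominus>\<^bsub>M\<^esub> y"] y by (simp add: M.minus_eq N.minus_eq)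
qed

lemma free_mod_simps:
  "carrier (free_mod R n) = {v. (\<forall>i<n. v i \<in> carrier R) \<and> (\<forall>i\<ge>n. v i = \<zero>\<^bsub>R\<^esub>)}"
  "\<zero>\<^bsub>free_mod R n\<^esub> = (\<lambda>_. \<zero>\<^bsub>R\<^esub>)"
  "u \<oplus>\<^bsub>free_mod R n\<^esub> v = (\<lambda>i. if i < n then u i \<oplus>\<^bsub>R\<^esub> v i else \<zero>\<^bsub>R\<^esub>)"
  "a \<odot>\<^bsub>free_mod R n\<^esub> v = (\<lambda>i. if i < n then a \<otimes>\<^bsub>R\<^esub> v i else \<zero>\<^bsub>R\<^esub>)"
  by (simp_all add: free_mod_def)

lemma free_mod_coord_closed:
  assumes "ring R" "v \<in> carrier (free_mod R n)"
  shows "v i \<in> carrier R"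
  using assms ring.ring_simprules(2)[OF assms(1)] by (cases "i < n") (auto simp: free_mod_simps)

lemma free_mod_abelian_group:
  assumes "ring R"
  shows "abelian_group (free_mod R n)"
proof -
  interpret R: ring R by fact
  show ?thesis
  proof (rule abelian_groupI)
    fix x assume x: "x \<in> carrier (free_mod R n)"
    show "\<exists>y\<in>carrier (free_mod R n). y \<oplus>\<^bsub>free_mod R n\<^esub> x = \<zero>\<^bsub>free_mod R n\<^esub>"
      by (rule bexI[of _ "\<lambda>i. if i < n then \<ominus>\<^bsub>R\<^esub> x i else \<zero>\<^bsub>R\<^esub>"])
         (use x in \<open>auto simp: free_mod_simps R.l_neg\<close>)
  qed (auto simp: free_mod_simps R.a_ac)
qed

lemma free_mod_left_module:
  assumes "ring R"
  shows "left_module R (free_mod R n)"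
proof -
  interpret R: ring R by fact
  show ?thesis
    unfolding left_module_def using free_mod_abelian_group[OF assms]
    by (auto simp: free_mod_simps R.l_distr R.r_distr R.m_assoc assms)
qed

lemma free_mod_fg_projective:
  assumes "ring R"
  shows "fg_projective R (free_mod R n)"
  unfolding fg_projective_def
  using free_mod_left_module[OF assms] by (auto simp: lin_hom_def intro!: exI[of _ n])

section \<open>Finite fields\<close>

definition free_ins_zero :: "('a, 'c) ring_scheme \<Rightarrow> nat \<Rightarrow> (nat \<Rightarrow> 'a) \<Rightarrow> nat \<Rightarrow> 'a" where
  "free_ins_zero R j w = (\<lambda>i. if i < j then w i else if i = j then \<zero>\<^bsub>R\<^esub> else w (i - 1))"

definition free_del :: "('a, 'c) ring_scheme \<Rightarrow> nat \<Rightarrow> nat \<Rightarrow> (nat \<Rightarrow> 'a) \<Rightarrow> nat \<Rightarrow> 'a" where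
  "free_del R n j z = (\<lambda>i. if i < j then z i else if i < n then z (Suc i) else \<zero>\<^bsub>R\<^esub>)"

lemma lin_hom_free_ins_zero:
  assumes R: "ring R" and f: "f \<in> lin_hom R (free_mod R (Suc n)) M" and j: "j \<le> n"
  shows "(\<lambda>w. f (free_ins_zero R j w)) \<in> lin_hom R (free_mod R n) M"
proof -
  interpret R: ring R by fact
  have closed: "free_ins_zero R j w \<in> carrier (free_mod R (Suc n))"
    if "w \<in> carrier (free_mod R n)" for w
    using that j by (auto simp: free_mod_simps free_ins_zero_def)
  have add: "free_ins_zero R j (x \<oplus>\<^bsub>free_mod R n\<^esub> y)
      = free_ins_zero R j x \<oplus>\<^bsub>free_mod R (Suc n)\<^esub> free_ins_zero R j y" for x y
    using j by (intro ext) (auto simp: free_mod_simps free_ins_zero_def)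
  have smult: "free_ins_zero R j (a \<odot>\<^bsub>free_mod R n\<^esub> x) = a \<odot>\<^bsub>free_mod R (Suc n)\<^esub> free_ins_zero R j x"
    if "a \<in> carrier R" for a x
    using j that by (intro ext) (auto simp: free_mod_simps free_ins_zero_def)
  show ?thesis
    unfolding lin_hom_def
    using closed add smult lin_hom_closed[OF f] lin_hom_add[OF f] lin_hom_smult[OF f]
    by (auto simp: free_mod_simps)
qed

lemma free_ins_zero_del:
  assumes z: "z \<in> carrier (free_mod R (Suc n))" and j: "j \<le> n" and zj: "z j = \<zero>\<^bsub>R\<^esub>"
  shows "free_del R n j z \<in> carrier (free_mod R n)" and "free_ins_zero R j (free_del R n j z) = z"
proof -
  show "free_del R n j z \<in> carrier (free_mod R n)"
    using z j by (auto simp: free_mod_simps free_del_def)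
  show "free_ins_zero R j (free_del R n j z) = z"
  proof
    fix i
    consider "i < j" | "i = j" | "j < i" "i \<le> n" | "n < i" by linarith
    then show "free_ins_zero R j (free_del R n j z) i = z i"
      by cases (use z zj j in \<open>auto simp: free_ins_zero_def free_del_def free_mod_simps\<close>)
  qed
qed

lemma free_mod_nonzero_coord_le:
  "v \<in> carrier (free_mod R (Suc n)) \<Longrightarrow> v j \<noteq> \<zero>\<^bsub>R\<^esub> \<Longrightarrow> j \<le> n"
  by (rule ccontr) (simp add: free_mod_simps)

text \<open>Subtracting a multiple of \<open>v\<close> clears the \<open>j\<close>-th coordinate of any preimage.\<close>
lemma field_surj_drop_generator:
  assumes R: "field R" and M: "left_module R M"
    and f: "f \<in> lin_hom R (free_mod R (Suc n)) M" and surj: "f ` carrier (free_mod R (Suc n)) = carrier M"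
    and v: "v \<in> carrier (free_mod R (Suc n))" "f v = \<zero>\<^bsub>M\<^esub>" and vj: "v j \<noteq> \<zero>\<^bsub>R\<^esub>"
  shows "(\<lambda>w. f (free_ins_zero R j w)) ` carrier (free_mod R n) = carrier M"
proof -
  interpret R: field R by fact
  interpret M: abelian_group M using left_module_abelian_group[OF M] .
  interpret F: abelian_group "free_mod R (Suc n)" using free_mod_abelian_group[OF R.ring_axioms] .
  have j: "j \<le> n" using free_mod_nonzero_coord_le[OF v(1) vj] .
  have g: "(\<lambda>w. f (free_ins_zero R j w)) \<in> lin_hom R (free_mod R n) M"
    using lin_hom_free_ins_zero[OF R.ring_axioms f j] .
  have "m \<in> (\<lambda>w. f (free_ins_zero R j w)) ` carrier (free_mod R n)" if m: "m \<in> carrier M" for m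
  proof -
    have "m \<in> f ` carrier (free_mod R (Suc n))" using surj m by simp
    then obtain w where w: "w \<in> carrier (free_mod R (Suc n))" "f w = m" by auto
    have wj: "w j \<in> carrier R" and vjc: "v j \<in> carrier R"
      using free_mod_coord_closed[OF R.ring_axioms w(1)] free_mod_coord_closed[OF R.ring_axioms v(1)] .
    have "v j \<in> Units R" using vj vjc R.field_Units by blast
    then have inv: "inv\<^bsub>R\<^esub> (v j) \<in> carrier R" "inv\<^bsub>R\<^esub> (v j) \<otimes>\<^bsub>R\<^esub> v j = \<one>\<^bsub>R\<^esub>"
      by (simp_all add: R.Units_l_inv)
    define c where "c = \<ominus>\<^bsub>R\<^esub> (w j \<otimes>\<^bsub>R\<^esub> inv\<^bsub>R\<^esub> (v j))"
    have c: "c \<in> carrier R" using wj inv by (simp add: c_def)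
    define z where "z = w \<oplus>\<^bsub>free_mod R (Suc n)\<^esub> c \<odot>\<^bsub>free_mod R (Suc n)\<^esub> v"
    have cv: "c \<odot>\<^bsub>free_mod R (Suc n)\<^esub> v \<in> carrier (free_mod R (Suc n))"
      using left_module_smult_closed[OF free_mod_left_module[OF R.ring_axioms] c v(1)] .
    have z: "z \<in> carrier (free_mod R (Suc n))" using w(1) cv unfolding z_def by (rule F.a_closed)
    have "f z = m \<oplus>\<^bsub>M\<^esub> c \<odot>\<^bsub>M\<^esub> \<zero>\<^bsub>M\<^esub>"
      unfolding z_def lin_hom_add[OF f w(1) cv] lin_hom_smult[OF f c v(1)] w(2) v(2) ..
    also have "\<dots> = m" using left_module_smult_zero[OF M c] m by simp
    finally have fz: "f z = m" .
    have "c \<otimes>\<^bsub>R\<^esub> v j = \<ominus>\<^bsub>R\<^esub> w j"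
      using wj vjc inv by (simp add: c_def R.l_minus R.m_assoc)
    then have "z j = w j \<oplus>\<^bsub>R\<^esub> \<ominus>\<^bsub>R\<^esub> w j"
      using j by (simp add: z_def free_mod_simps)
    then have "z j = \<zero>\<^bsub>R\<^esub>" using wj by (simp add: R.r_neg)
    then have "free_del R n j z \<in> carrier (free_mod R n)" "free_ins_zero R j (free_del R n j z) = z"
      using free_ins_zero_del[OF z j] by blast+
    then show ?thesis using fz by (intro image_eqI[of _ _ "free_del R n j z"]) simp_all
  qed
  then show ?thesis using lin_hom_closed[OF g] by blast
qed

lemma field_free_presentation:
  assumes R: "field R" and M: "left_module R M"
    and f: "f \<in> lin_hom R (free_mod R n) M" and surj: "f ` carrier (free_mod R n) = carrier M"
  shows "\<exists>m g. g \<in> lin_hom R (free_mod R m) M \<and> g ` carrier (free_mod R m) = carrier M \<and>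
           (\<forall>v \<in> carrier (free_mod R m). g v = \<zero>\<^bsub>M\<^esub> \<longrightarrow> v = (\<lambda>_. \<zero>\<^bsub>R\<^esub>))"
  using f surj
proof (induction n arbitrary: f)
  case 0
  then show ?case by (intro exI[of _ 0] exI[of _ f]) (auto simp: free_mod_simps)
next
  case (Suc n)
  show ?case
  proof (cases "\<forall>v \<in> carrier (free_mod R (Suc n)). f v = \<zero>\<^bsub>M\<^esub> \<longrightarrow> v = (\<lambda>_. \<zero>\<^bsub>R\<^esub>)")
    case True
    then show ?thesis using Suc.prems by blast
  next
    case False
    then obtain v j where v: "v \<in> carrier (free_mod R (Suc n))" "f v = \<zero>\<^bsub>M\<^esub>" "v j \<noteq> \<zero>\<^bsub>R\<^esub>"
      by fast
    have j: "j \<le> n" using free_mod_nonzero_coord_le[OF v(1,3)] .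
    show ?thesis
      by (rule Suc.IH[OF lin_hom_free_ins_zero[OF field.is_ring[OF R] Suc.prems(1) j]
            field_surj_drop_generator[OF R M Suc.prems v]])
  qed
qed

lemma field_has_fin_proj_res:
  assumes R: "field R" and fg: "fin_generated R M"
  shows "has_fin_proj_res R M"
proof -
  interpret R: field R by fact
  have M: "left_module R M" using fg by (simp add: fin_generated_def)
  interpret M: abelian_group M using left_module_abelian_group[OF M] .
  obtain n f where "f \<in> lin_hom R (free_mod R n) M" "f ` carrier (free_mod R n) = carrier M"
    using fg unfolding fin_generated_def by blast
  then obtain m g where g: "g \<in> lin_hom R (free_mod R m) M" "g ` carrier (free_mod R m) = carrier M"
      "\<forall>v \<in> carrier (free_mod R m). g v = \<zero>\<^bsub>M\<^esub> \<longrightarrow> v = (\<lambda>_. \<zero>\<^bsub>R\<^esub>)"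
    using field_free_presentation[OF R M] by blast
  define P :: "nat \<Rightarrow> ('a, nat \<Rightarrow> 'a) module" where
    "P = (\<lambda>i. if i = 0 then free_mod R m else free_mod R 0)"
  define d :: "nat \<Rightarrow> (nat \<Rightarrow> 'a) \<Rightarrow> nat \<Rightarrow> 'a" where "d = (\<lambda>i _ _. \<zero>\<^bsub>R\<^esub>)"
  have zero: "carrier (free_mod R 0) = {\<lambda>_. \<zero>\<^bsub>R\<^esub>}" by (auto simp: free_mod_simps)
  have g0: "g (\<lambda>_. \<zero>\<^bsub>R\<^esub>) = \<zero>\<^bsub>M\<^esub>"
    using lin_hom_zero[OF g(1) free_mod_abelian_group[OF R.ring_axioms] M.abelian_group_axioms]
    by (simp add: free_mod_simps)
  show ?thesis
    unfolding has_fin_proj_res_def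
  proof (intro exI conjI allI impI)
    show "fg_projective R (P i)" for i
      by (simp add: P_def free_mod_fg_projective[OF R.ring_axioms])
    show "carrier (P i) = {\<zero>\<^bsub>P i\<^esub>}" if "0 < i" for i
      using that zero by (simp add: P_def free_mod_simps)
    show "d i \<in> lin_hom R (P (Suc i)) (P i)" for i
      by (auto simp: lin_hom_def d_def P_def free_mod_simps)
    show "g \<in> lin_hom R (P 0) M" "g ` carrier (P 0) = carrier M"
      using g(1,2) by (simp_all add: P_def)
    show "lin_kernel (P 0) M g = d 0 ` carrier (P 1)"
      using g(3) g0 by (auto simp: P_def lin_kernel_def d_def zero free_mod_simps)
    show "lin_kernel (P (Suc i)) (P i) (d i) = d (Suc i) ` carrier (P (Suc (Suc i)))" for i
      by (auto simp: P_def lin_kernel_def d_def zero free_mod_simps)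
  qed
qed

lemma finite_ring_noetherian:
  assumes R: "ring R" and fin: "finite (carrier R)"
  shows "noetherian_ring R"
  unfolding noetherian_ring_def
proof (intro conjI allI impI R)
  fix I :: "nat \<Rightarrow> _" assume "(\<forall>n. left_ideal R (I n)) \<and> (\<forall>n. I n \<subseteq> I (Suc n))"
  then have sub: "I n \<subseteq> carrier R" and chain: "I n \<subseteq> I (Suc n)" for n
    by (auto simp: left_ideal_def)
  have mono: "I m \<subseteq> I n" if "m \<le> n" for m n
    using lift_Suc_mono_le[of I, OF chain that] .
  have fin_cards: "finite (range (\<lambda>n. card (I n)))"
    by (rule finite_subset[of _ "{..card (carrier R)}"]) (auto intro: card_mono[OF fin sub])
  obtain N where N: "card (I N) = Max (range (\<lambda>n. card (I n)))"
    using Max_in[OF fin_cards] by auto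
  have "I n = I N" if "n \<ge> N" for n
  proof -
    have "card (I n) \<le> card (I N)" using N fin_cards by simp
    moreover have "finite (I n)" using fin sub finite_subset by blast
    ultimately show ?thesis using mono[OF that] card_subset_eq by (metis antisym card_mono)
  qed
  then show "\<exists>N. \<forall>n\<ge>N. I n = I N" by blast
qed

lemma finite_field_regular:
  assumes "field R" and "finite (carrier R)"
  shows "regular_ring R"
  unfolding regular_ring_def
  using assms finite_ring_noetherian[OF field.is_ring] field_has_fin_proj_res by blast

lemma infinite_type_has_prime_field:
  fixes p :: nat
  assumes inf: "infinite (UNIV :: 'r set)" and p: "prime p"
  shows "\<exists>S :: 'r ring. field S \<and> finite (carrier S) \<and> add_pow S p \<one>\<^bsub>S\<^esub> = \<zero>\<^bsub>S\<^esub>"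
proof -
  define Z where "Z = residue_ring (int p)"
  interpret Z: field Z
    unfolding Z_def using p by (simp add: residues_prime.is_field residues_prime_def)
  have Z_carrier: "carrier Z = {0..int p - 1}" by (simp add: Z_def residue_ring_def)
  obtain \<phi> :: "nat \<Rightarrow> 'r" where \<phi>: "inj \<phi>" using infinite_countable_subset[OF inf] by blast
  define \<psi> where "\<psi> = (\<lambda>x::int. \<phi> (nat x))"
  have inj_\<psi>: "inj_on \<psi> (carrier Z)"
    unfolding inj_on_def \<psi>_def Z_carrier using \<phi> by (auto simp: inj_def) (metis eq_nat_nat_iff)
  define \<psi>' where "\<psi>' = inv_into (carrier Z) \<psi>"
  have \<psi>': "\<psi>' (\<psi> x) = x" if "x \<in> carrier Z" for x
    unfolding \<psi>'_def using inj_\<psi> that by (simp add: inv_into_f_f)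
  text \<open>\<open>\<int>/p\<close> lives in type \<open>int\<close>; copy it into \<open>'r\<close> along \<open>\<psi>\<close>.\<close>
  define S :: "'r ring" where "S = \<lparr>carrier = \<psi> ` carrier Z,
      monoid.mult = (\<lambda>a b. \<psi> (\<psi>' a \<otimes>\<^bsub>Z\<^esub> \<psi>' b)), one = \<psi> \<one>\<^bsub>Z\<^esub>, zero = \<psi> \<zero>\<^bsub>Z\<^esub>,
      add = (\<lambda>a b. \<psi> (\<psi>' a \<oplus>\<^bsub>Z\<^esub> \<psi>' b))\<rparr>"
  have "\<psi> \<in> ring_iso Z S"
    by (rule ring_iso_memI) (auto simp: S_def \<psi>' inj_\<psi> bij_betw_def)
  from Z.ring_iso_imp_img_field[OF this] have S: "field S"
    by (simp add: S_def)
  interpret S: field S by (rule S)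
  have p1: "p > 1" using p prime_gt_1_nat by blast
  have add_pow_one: "add_pow S n \<one>\<^bsub>S\<^esub> = \<psi> (int n mod int p)" for n
  proof (induction n)
    case 0
    have "add_pow S (0::nat) \<one>\<^bsub>S\<^esub> = \<zero>\<^bsub>S\<^esub>" by simp
    then show ?case by (simp add: S_def Z_def residue_ring_def)
  next
    case (Suc n)
    have "int n mod int p \<in> carrier Z" using p1 by (simp add: Z_carrier)
    moreover have "add_pow S (Suc n) \<one>\<^bsub>S\<^esub> = add_pow S n \<one>\<^bsub>S\<^esub> \<oplus>\<^bsub>S\<^esub> \<one>\<^bsub>S\<^esub>" by simp
    ultimately have "add_pow S (Suc n) \<one>\<^bsub>S\<^esub> = \<psi> ((int n mod int p + 1) mod int p)"
      using Suc Z.one_closed by (simp add: S_def \<psi>') (simp add: Z_def residue_ring_def)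
    also have "(int n mod int p + 1) mod int p = int (Suc n) mod int p"
      by (metis mod_add_left_eq of_nat_Suc add.commute)
    finally show ?case .
  qed
  have "add_pow S p \<one>\<^bsub>S\<^esub> = \<zero>\<^bsub>S\<^esub>"
    using add_pow_one[of p] by (simp add: S_def Z_def residue_ring_def)
  moreover have "finite (carrier S)" by (simp add: S_def Z_carrier)
  ultimately show ?thesis using S by blast
qed

section \<open>Exactness of multiplication by a pair of annihilating scalars\<close>

definition smult_exact :: "('a, 'b, 'd) module_scheme \<Rightarrow> 'b set \<Rightarrow> 'a \<Rightarrow> 'a \<Rightarrow> bool" where
  "smult_exact M S s t \<longleftrightarrow> (\<forall>x\<in>S. s \<odot>\<^bsub>M\<^esub> x = \<zero>\<^bsub>M\<^esub> \<longrightarrow> (\<exists>y\<in>S. x = t \<odot>\<^bsub>M\<^esub> y))"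

lemma smult_exact_image:
  assumes s: "s \<in> carrier A" and t: "t \<in> carrier A" and ts: "t \<otimes>\<^bsub>A\<^esub> s = \<zero>\<^bsub>A\<^esub>"
    and X: "left_module A X" and Y: "left_module A Y" and f: "f \<in> lin_hom A X Y"
    and ker: "smult_exact X (lin_kernel X Y f) t s" and src: "smult_exact X (carrier X) s t"
  shows "smult_exact Y (f ` carrier X) s t"
  unfolding smult_exact_def
proof (intro ballI impI)
  interpret X: abelian_group X using left_module_abelian_group[OF X] .
  interpret Y: abelian_group Y using left_module_abelian_group[OF Y] .
  fix l assume "l \<in> f ` carrier X" and sl: "s \<odot>\<^bsub>Y\<^esub> l = \<zero>\<^bsub>Y\<^esub>"
  then obtain x where x: "x \<in> carrier X" "l = f x" by blast
  have sx: "s \<odot>\<^bsub>X\<^esub> x \<in> carrier X" using left_module_smult_closed[OF X s x(1)] .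
  have "f (s \<odot>\<^bsub>X\<^esub> x) = \<zero>\<^bsub>Y\<^esub>" using lin_hom_smult[OF f s x(1)] sl x by simp
  then have "s \<odot>\<^bsub>X\<^esub> x \<in> lin_kernel X Y f" using sx by (simp add: lin_kernel_def)
  moreover have "t \<odot>\<^bsub>X\<^esub> (s \<odot>\<^bsub>X\<^esub> x) = \<zero>\<^bsub>X\<^esub>"
    using left_module_smult_assoc[OF X t s x(1)] ts left_module_zero_smult[OF X x(1)] by simp
  ultimately obtain k where k: "k \<in> lin_kernel X Y f" "s \<odot>\<^bsub>X\<^esub> x = s \<odot>\<^bsub>X\<^esub> k"
    using ker unfolding smult_exact_def by blast
  have kX: "k \<in> carrier X" and fk: "f k = \<zero>\<^bsub>Y\<^esub>" using k(1) by (auto simp: lin_kernel_def)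
  have "s \<odot>\<^bsub>X\<^esub> (x \<ominus>\<^bsub>X\<^esub> k) = \<zero>\<^bsub>X\<^esub>"
    using left_module_smult_diff[OF X s x(1) kX] k(2) left_module_smult_closed[OF X s kX]
    by (simp add: X.r_neg X.minus_eq)
  then obtain y where y: "y \<in> carrier X" "x \<ominus>\<^bsub>X\<^esub> k = t \<odot>\<^bsub>X\<^esub> y"
    using src x(1) kX unfolding smult_exact_def by blast
  have "f (x \<ominus>\<^bsub>X\<^esub> k) = f x"
    using lin_hom_diff[OF f X.abelian_group_axioms Y.abelian_group_axioms x(1) kX] fk
      lin_hom_closed[OF f x(1)] by (simp add: Y.minus_eq)
  then have "l = t \<odot>\<^bsub>Y\<^esub> f y" using y x lin_hom_smult[OF f t y(1)] by simp
  then show "\<exists>y\<in>f ` carrier X. l = t \<odot>\<^bsub>Y\<^esub> y" using y(1) by blast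
qed

lemma smult_exact_zero:
  assumes "left_module A X" "s \<in> carrier A" "t \<in> carrier A"
  shows "smult_exact X {\<zero>\<^bsub>X\<^esub>} s t"
  using left_module_smult_zero[OF assms(1,3)] by (auto simp: smult_exact_def)

lemma free_mod_smult_exact:
  assumes A: "ring A" and s: "s \<in> carrier A" and t: "t \<in> carrier A"
    and exact: "\<And>a. a \<in> carrier A \<Longrightarrow> s \<otimes>\<^bsub>A\<^esub> a = \<zero>\<^bsub>A\<^esub> \<Longrightarrow> \<exists>b\<in>carrier A. a = t \<otimes>\<^bsub>A\<^esub> b"
  shows "smult_exact (free_mod A n) (carrier (free_mod A n)) s t"
  unfolding smult_exact_def
proof (intro ballI impI)
  interpret A: ring A by fact
  fix x assume x: "x \<in> carrier (free_mod A n)" and sx: "s \<odot>\<^bsub>free_mod A n\<^esub> x = \<zero>\<^bsub>free_mod A n\<^esub>"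
  have "\<exists>b\<in>carrier A. x j = t \<otimes>\<^bsub>A\<^esub> b" if "j < n" for j
  proof (rule exact)
    show "x j \<in> carrier A" using free_mod_coord_closed[OF A x] .
    show "s \<otimes>\<^bsub>A\<^esub> x j = \<zero>\<^bsub>A\<^esub>" using fun_cong[OF sx, of j] that by (simp add: free_mod_simps)
  qed
  then obtain b where b: "\<And>j. j < n \<Longrightarrow> b j \<in> carrier A \<and> x j = t \<otimes>\<^bsub>A\<^esub> b j" by metis
  define y where "y = (\<lambda>j. if j < n then b j else \<zero>\<^bsub>A\<^esub>)"
  have "y \<in> carrier (free_mod A n)" using b by (simp add: y_def free_mod_simps)
  moreover have "x = t \<odot>\<^bsub>free_mod A n\<^esub> y"
  proof
    fix j show "x j = (t \<odot>\<^bsub>free_mod A n\<^esub> y) j"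
      using b[of j] x by (cases "j < n") (simp_all add: y_def free_mod_simps)
  qed
  ultimately show "\<exists>y\<in>carrier (free_mod A n). x = t \<odot>\<^bsub>free_mod A n\<^esub> y" by blast
qed

lemma smult_exact_retract:
  assumes X: "left_module A X" and F: "left_module A F" and s: "s \<in> carrier A" and t: "t \<in> carrier A"
    and i: "i \<in> lin_hom A X F" and q: "q \<in> lin_hom A F X" and qi: "\<And>x. x \<in> carrier X \<Longrightarrow> q (i x) = x"
    and exact: "smult_exact F (carrier F) s t"
  shows "smult_exact X (carrier X) s t"
  unfolding smult_exact_def
proof (intro ballI impI)
  fix x assume x: "x \<in> carrier X" and sx: "s \<odot>\<^bsub>X\<^esub> x = \<zero>\<^bsub>X\<^esub>"
  have "s \<odot>\<^bsub>F\<^esub> i x = \<zero>\<^bsub>F\<^esub>"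
    using lin_hom_smult[OF i s x] sx
      lin_hom_zero[OF i left_module_abelian_group[OF X] left_module_abelian_group[OF F]] by simp
  then obtain w where w: "w \<in> carrier F" "i x = t \<odot>\<^bsub>F\<^esub> w"
    using exact lin_hom_closed[OF i x] unfolding smult_exact_def by blast
  then have "x = t \<odot>\<^bsub>X\<^esub> q w" using qi[OF x] lin_hom_smult[OF q t w(1)] by simp
  then show "\<exists>y\<in>carrier X. x = t \<odot>\<^bsub>X\<^esub> y" using lin_hom_closed[OF q w(1)] by blast
qed

lemma fg_projective_smult_exact:
  assumes A: "ring A" and s: "s \<in> carrier A" and t: "t \<in> carrier A"
    and exact: "\<And>a. a \<in> carrier A \<Longrightarrow> s \<otimes>\<^bsub>A\<^esub> a = \<zero>\<^bsub>A\<^esub> \<Longrightarrow> \<exists>b\<in>carrier A. a = t \<otimes>\<^bsub>A\<^esub> b"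
    and P: "fg_projective A X"
  shows "smult_exact X (carrier X) s t"
proof -
  have X: "left_module A X" using P by (simp add: fg_projective_def)
  obtain n i q where i: "i \<in> lin_hom A X (free_mod A n)" and q: "q \<in> lin_hom A (free_mod A n) X"
    and qi: "\<forall>x\<in>carrier X. q (i x) = x"
    using P unfolding fg_projective_def by blast
  show ?thesis
    using smult_exact_retract[OF X free_mod_left_module[OF A] s t i q _ free_mod_smult_exact[OF A s t exact]]
      qi by blast
qed

text \<open>Downward induction from the zero terms at the top: the image of each differential is exact
  because the kernel of that differential is the image of the next one.\<close>
lemma fin_proj_res_smult_exact:
  assumes A: "ring A" and s: "s \<in> carrier A" and t: "t \<in> carrier A"
    and st: "s \<otimes>\<^bsub>A\<^esub> t = \<zero>\<^bsub>A\<^esub>" and ts: "t \<otimes>\<^bsub>A\<^esub> s = \<zero>\<^bsub>A\<^esub>"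
    and exact_s: "\<And>a. a \<in> carrier A \<Longrightarrow> s \<otimes>\<^bsub>A\<^esub> a = \<zero>\<^bsub>A\<^esub> \<Longrightarrow> \<exists>b\<in>carrier A. a = t \<otimes>\<^bsub>A\<^esub> b"
    and exact_t: "\<And>a. a \<in> carrier A \<Longrightarrow> t \<otimes>\<^bsub>A\<^esub> a = \<zero>\<^bsub>A\<^esub> \<Longrightarrow> \<exists>b\<in>carrier A. a = s \<otimes>\<^bsub>A\<^esub> b"
    and res: "has_fin_proj_res A M" and M: "left_module A M"
  shows "smult_exact M (carrier M) s t"
proof -
  obtain P :: "nat \<Rightarrow> ('a, nat \<Rightarrow> 'a) module" and d \<epsilon> k where
    P: "\<forall>i. fg_projective A (P i)" and top: "\<forall>i>k. carrier (P i) = {\<zero>\<^bsub>P i\<^esub>}"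
    and d: "\<forall>i. d i \<in> lin_hom A (P (Suc i)) (P i)"
    and \<epsilon>: "\<epsilon> \<in> lin_hom A (P 0) M" and \<epsilon>_surj: "\<epsilon> ` carrier (P 0) = carrier M"
    and exact0: "lin_kernel (P 0) M \<epsilon> = d 0 ` carrier (P 1)"
    and exact: "\<forall>i. lin_kernel (P (Suc i)) (P i) (d i) = d (Suc i) ` carrier (P (Suc (Suc i)))"
    using res unfolding has_fin_proj_res_def by (elim exE conjE) (rule that)
  note P = P[rule_format] and d = d[rule_format] and exact = exact[rule_format]
  have P_mod: "left_module A (P i)" for i using P by (simp add: fg_projective_def)
  have P_exact: "smult_exact (P i) (carrier (P i)) s t" "smult_exact (P i) (carrier (P i)) t s" for i
    using fg_projective_smult_exact[OF A s t exact_s P] fg_projective_smult_exact[OF A t s exact_t P]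
    by blast+
  define K where "K i = d i ` carrier (P (Suc i))" for i
  have K_exact: "smult_exact (P i) (K i) s t \<and> smult_exact (P i) (K i) t s" if "i \<ge> k" for i
  proof -
    have "K i = {\<zero>\<^bsub>P i\<^esub>}"
      using top that
        lin_hom_zero[OF d left_module_abelian_group[OF P_mod] left_module_abelian_group[OF P_mod]]
      by (simp add: K_def)
    then show ?thesis using smult_exact_zero[OF P_mod] s t by simp
  qed
  have K_step: "smult_exact (P i) (K i) s t \<and> smult_exact (P i) (K i) t s"
    if "smult_exact (P (Suc i)) (K (Suc i)) s t \<and> smult_exact (P (Suc i)) (K (Suc i)) t s" for i
    using that smult_exact_image[OF s t ts P_mod P_mod d _ P_exact(1)]
      smult_exact_image[OF t s st P_mod P_mod d _ P_exact(2)]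
    by (simp add: K_def exact)
  have "smult_exact (P (k - j)) (K (k - j)) s t \<and> smult_exact (P (k - j)) (K (k - j)) t s" for j
  proof (induction j)
    case 0 then show ?case using K_exact by simp
  next
    case (Suc j)
    then show ?case
      using K_step[of "k - Suc j"] K_exact[of "k - Suc j"] by (cases "j < k") (simp_all add: Suc_diff_Suc)
  qed
  from this[of k] have "smult_exact (P 0) (lin_kernel (P 0) M \<epsilon>) t s"
    by (simp add: K_def exact0)
  from smult_exact_image[OF s t ts P_mod M \<epsilon> this P_exact(1)] show ?thesis
    by (simp add: \<epsilon>_surj)
qed

section \<open>The cyclic module \<open>A/Au\<close>\<close>

lemma (in ring) diff_split: "x \<in> carrier R \<Longrightarrow> y \<in> carrier R \<Longrightarrow> z \<in> carrier R \<Longrightarrow> x \<ominus> z = (x \<ominus> y) \<oplus> (y \<ominus> z)"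
  by (simp add: minus_eq a_assoc a_assoc[symmetric, of "\<ominus> y" y] l_neg)

locale principal_quotient = ring A for A :: "('a, 'b) ring_scheme" (structure) +
  fixes u assumes u_closed: "u \<in> carrier A"
begin

definition Au :: "'a set" where "Au = {a \<otimes> u | a. a \<in> carrier A}"

text \<open>An element of \<open>A/Au\<close> is a coset \<open>x + Au\<close>, encoded as the set of constant functions
  with values in that coset so that the module has carrier type \<open>(nat \<Rightarrow> 'a) set\<close>, as
  \<^const>\<open>regular_coherent_ring\<close> demands.\<close>
definition cls :: "'a \<Rightarrow> (nat \<Rightarrow> 'a) set" where
  "cls x = {(\<lambda>_. y) | y. y \<in> carrier A \<and> y \<ominus> x \<in> Au}"

definition cls_rep :: "(nat \<Rightarrow> 'a) set \<Rightarrow> 'a" where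
  "cls_rep S = (SOME x. x \<in> carrier A \<and> S = cls x)"

definition quot :: "('a, (nat \<Rightarrow> 'a) set) module" where
  "quot = \<lparr>carrier = cls ` carrier A, monoid.mult = (\<lambda>S T. S), one = cls \<zero>,
     zero = cls \<zero>, add = (\<lambda>S T. cls (cls_rep S \<oplus> cls_rep T)), smult = (\<lambda>a S. cls (a \<otimes> cls_rep S))\<rparr>"

lemma quot_simps:
  "carrier quot = cls ` carrier A" "\<zero>\<^bsub>quot\<^esub> = cls \<zero>"
  "S \<oplus>\<^bsub>quot\<^esub> T = cls (cls_rep S \<oplus> cls_rep T)" "a \<odot>\<^bsub>quot\<^esub> S = cls (a \<otimes> cls_rep S)"
  by (simp_all add: quot_def)

lemma Au_closed: "x \<in> Au \<Longrightarrow> x \<in> carrier A"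
  unfolding Au_def using u_closed by auto

lemma zero_Au: "\<zero> \<in> Au"
  unfolding Au_def using u_closed by (auto intro!: exI[of _ \<zero>])

lemma Au_diff:
  assumes "x \<in> Au" "y \<in> Au"
  shows "x \<ominus> y \<in> Au"
proof -
  obtain a b where ab: "a \<in> carrier A" "x = a \<otimes> u" "b \<in> carrier A" "y = b \<otimes> u"
    using assms unfolding Au_def by blast
  then have "x \<ominus> y = (a \<ominus> b) \<otimes> u" using u_closed by (simp add: l_minus minus_eq l_distr)
  then show ?thesis unfolding Au_def using ab by blast
qed

lemma Au_add: "x \<in> Au \<Longrightarrow> y \<in> Au \<Longrightarrow> x \<oplus> y \<in> Au"
  using Au_diff[OF _ Au_diff[OF zero_Au]] Au_closed by (simp add: minus_eq)

lemma Au_lmult: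
  assumes r: "r \<in> carrier A" and x: "x \<in> Au"
  shows "r \<otimes> x \<in> Au"
proof -
  obtain a where a: "a \<in> carrier A" "x = a \<otimes> u" using x unfolding Au_def by blast
  then have "r \<otimes> x = (r \<otimes> a) \<otimes> u" using u_closed r by (simp add: m_assoc)
  then show ?thesis unfolding Au_def using a r by blast
qed

lemma cls_eq_iff:
  assumes x: "x \<in> carrier A" and y: "y \<in> carrier A"
  shows "cls x = cls y \<longleftrightarrow> x \<ominus> y \<in> Au"
proof
  assume "cls x = cls y"
  moreover have "(\<lambda>_::nat. x) \<in> cls x" using x zero_Au by (auto simp: cls_def r_neg minus_eq)
  ultimately obtain y' where "(\<lambda>_::nat. x) = (\<lambda>_. y')" "y' \<ominus> y \<in> Au" unfolding cls_def by blast
  then show "x \<ominus> y \<in> Au" by (metis (no_types))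
next
  assume xy: "x \<ominus> y \<in> Au"
  have "z \<ominus> x \<in> Au \<longleftrightarrow> z \<ominus> y \<in> Au" if z: "z \<in> carrier A" for z
  proof -
    have "y \<ominus> x \<in> Au"
      using Au_diff[OF zero_Au xy] x y by (simp add: minus_eq minus_add a_ac)
    then show ?thesis
      using diff_split[OF z x y] diff_split[OF z y x] Au_add xy by metis
  qed
  then show "cls x = cls y" unfolding cls_def by blast
qed

lemma quotE:
  assumes "S \<in> carrier quot" obtains x where "x \<in> carrier A" "S = cls x"
  using assms by (auto simp: quot_simps)

lemma cls_rep:
  assumes x: "x \<in> carrier A"
  shows "cls_rep (cls x) \<in> carrier A" "cls_rep (cls x) \<ominus> x \<in> Au"
proof -
  have "cls_rep (cls x) \<in> carrier A \<and> cls x = cls (cls_rep (cls x))"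
    unfolding cls_rep_def by (rule someI[of _ x]) (simp add: x)
  then show "cls_rep (cls x) \<in> carrier A" "cls_rep (cls x) \<ominus> x \<in> Au"
    using cls_eq_iff x by auto
qed

lemma cls_add:
  assumes x: "x \<in> carrier A" and y: "y \<in> carrier A"
  shows "cls x \<oplus>\<^bsub>quot\<^esub> cls y = cls (x \<oplus> y)"
proof -
  define x' y' where "x' = cls_rep (cls x)" and "y' = cls_rep (cls y)"
  have x': "x' \<in> carrier A" "x' \<ominus> x \<in> Au" and y': "y' \<in> carrier A" "y' \<ominus> y \<in> Au"
    using cls_rep x y by (auto simp: x'_def y'_def)
  have "(x' \<oplus> y') \<ominus> (x \<oplus> y) = (x' \<ominus> x) \<oplus> (y' \<ominus> y)"
    using x y x' y' by (simp add: minus_eq minus_add a_ac)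
  then have "(x' \<oplus> y') \<ominus> (x \<oplus> y) \<in> Au" using Au_add x' y' by simp
  then show ?thesis using cls_eq_iff x y x' y' by (simp add: quot_simps flip: x'_def y'_def)
qed

lemma cls_smult:
  assumes a: "a \<in> carrier A" and x: "x \<in> carrier A"
  shows "a \<odot>\<^bsub>quot\<^esub> cls x = cls (a \<otimes> x)"
proof -
  define x' where "x' = cls_rep (cls x)"
  have x': "x' \<in> carrier A" "x' \<ominus> x \<in> Au" using cls_rep x by (auto simp: x'_def)
  have "(a \<otimes> x') \<ominus> (a \<otimes> x) = a \<otimes> (x' \<ominus> x)"
    using a x x' by (simp add: minus_eq r_distr r_minus)
  then have "(a \<otimes> x') \<ominus> (a \<otimes> x) \<in> Au" using Au_lmult a x' by simp
  then show ?thesis using cls_eq_iff a x x' by (simp add: quot_simps flip: x'_def)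
qed

lemma cls_closed: "x \<in> carrier A \<Longrightarrow> cls x \<in> carrier quot"
  by (simp add: quot_simps)

lemma quot_abelian_group: "abelian_group quot"
proof (rule abelian_groupI)
  fix S T assume "S \<in> carrier quot" "T \<in> carrier quot"
  then show "S \<oplus>\<^bsub>quot\<^esub> T \<in> carrier quot"
    by (elim quotE) (simp add: cls_add cls_closed)
next
  show "\<zero>\<^bsub>quot\<^esub> \<in> carrier quot" by (simp add: quot_simps)
next
  fix S T U assume "S \<in> carrier quot" "T \<in> carrier quot" "U \<in> carrier quot"
  then show "S \<oplus>\<^bsub>quot\<^esub> T \<oplus>\<^bsub>quot\<^esub> U = S \<oplus>\<^bsub>quot\<^esub> (T \<oplus>\<^bsub>quot\<^esub> U)"
    by (elim quotE) (simp add: cls_add a_assoc)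
next
  fix S T assume "S \<in> carrier quot" "T \<in> carrier quot"
  then show "S \<oplus>\<^bsub>quot\<^esub> T = T \<oplus>\<^bsub>quot\<^esub> S"
    by (elim quotE) (simp add: cls_add a_comm)
next
  fix S assume "S \<in> carrier quot"
  then show "\<zero>\<^bsub>quot\<^esub> \<oplus>\<^bsub>quot\<^esub> S = S"
    by (elim quotE) (simp add: cls_add quot_simps(2))
next
  fix S assume "S \<in> carrier quot"
  then obtain x where x: "x \<in> carrier A" "S = cls x" by (elim quotE)
  then have "cls (\<ominus> x) \<oplus>\<^bsub>quot\<^esub> S = \<zero>\<^bsub>quot\<^esub>" by (simp add: cls_add quot_simps(2) l_neg)
  then show "\<exists>y\<in>carrier quot. y \<oplus>\<^bsub>quot\<^esub> S = \<zero>\<^bsub>quot\<^esub>" using x cls_closed by blast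
qed

lemma quot_left_module: "left_module A quot"
  unfolding left_module_def
proof (intro conjI ballI)
  show "ring A" "abelian_group quot" by (rule ring_axioms, rule quot_abelian_group)
next
  fix a S assume "a \<in> carrier A" "S \<in> carrier quot"
  then show "a \<odot>\<^bsub>quot\<^esub> S \<in> carrier quot" by (elim quotE) (simp add: cls_smult cls_closed)
next
  fix a b S assume "a \<in> carrier A" "b \<in> carrier A" "S \<in> carrier quot"
  then show "(a \<oplus> b) \<odot>\<^bsub>quot\<^esub> S = a \<odot>\<^bsub>quot\<^esub> S \<oplus>\<^bsub>quot\<^esub> b \<odot>\<^bsub>quot\<^esub> S"
    by (elim quotE) (simp add: cls_smult cls_add l_distr)
next
  fix a S T assume "a \<in> carrier A" "S \<in> carrier quot" "T \<in> carrier quot"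
  then show "a \<odot>\<^bsub>quot\<^esub> (S \<oplus>\<^bsub>quot\<^esub> T) = a \<odot>\<^bsub>quot\<^esub> S \<oplus>\<^bsub>quot\<^esub> a \<odot>\<^bsub>quot\<^esub> T"
    by (elim quotE) (simp add: cls_smult cls_add r_distr)
next
  fix a b S assume "a \<in> carrier A" "b \<in> carrier A" "S \<in> carrier quot"
  then show "(a \<otimes> b) \<odot>\<^bsub>quot\<^esub> S = a \<odot>\<^bsub>quot\<^esub> (b \<odot>\<^bsub>quot\<^esub> S)"
    by (elim quotE) (simp add: cls_smult m_assoc)
next
  fix S assume "S \<in> carrier quot"
  then show "\<one> \<odot>\<^bsub>quot\<^esub> S = S" by (elim quotE) (simp add: cls_smult)
qed

text \<open>The presentation \<open>A \<longrightarrow> A \<longrightarrow> A/Au \<longrightarrow> 0\<close>, with \<open>A\<close> as \<^term>\<open>free_mod A 1\<close>.\<close>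
definition quot_proj :: "(nat \<Rightarrow> 'a) \<Rightarrow> (nat \<Rightarrow> 'a) set" where
  "quot_proj v = cls (v 0)"

definition mult_u :: "(nat \<Rightarrow> 'a) \<Rightarrow> nat \<Rightarrow> 'a" where
  "mult_u v i = (if i < 1 then v 0 \<otimes> u else \<zero>)"

definition free1 :: "'a \<Rightarrow> nat \<Rightarrow> 'a" where
  "free1 x i = (if i < 1 then x else \<zero>)"

lemma free1_closed: "x \<in> carrier A \<Longrightarrow> free1 x \<in> carrier (free_mod A 1)"
  by (simp add: free1_def free_mod_simps)

lemma free_mod_1_coord: "v \<in> carrier (free_mod A 1) \<Longrightarrow> v 0 \<in> carrier A"
  by (simp add: free_mod_simps)

lemma quot_proj_lin_hom: "quot_proj \<in> lin_hom A (free_mod A 1) quot"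
  unfolding lin_hom_def using free_mod_1_coord
  by (auto simp: quot_proj_def cls_closed free_mod_simps cls_add cls_smult)

lemma quot_proj_surj: "quot_proj ` carrier (free_mod A 1) = carrier quot"
proof
  show "quot_proj ` carrier (free_mod A 1) \<subseteq> carrier quot"
    using free_mod_1_coord by (auto simp: quot_proj_def cls_closed)
  show "carrier quot \<subseteq> quot_proj ` carrier (free_mod A 1)"
  proof
    fix S assume "S \<in> carrier quot"
    then obtain x where x: "x \<in> carrier A" "S = cls x" by (elim quotE)
    then have "S = quot_proj (free1 x)" by (simp add: quot_proj_def free1_def)
    then show "S \<in> quot_proj ` carrier (free_mod A 1)" using free1_closed[OF x(1)] by blast
  qed
qed

lemma mult_u_lin_hom: "mult_u \<in> lin_hom A (free_mod A 1) (free_mod A 1)"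
  unfolding lin_hom_def using free_mod_1_coord u_closed
  by (auto simp: mult_u_def free_mod_simps l_distr m_assoc)

lemma image_mult_u: "mult_u ` carrier (free_mod A 1) = lin_kernel (free_mod A 1) quot quot_proj"
proof
  show "mult_u ` carrier (free_mod A 1) \<subseteq> lin_kernel (free_mod A 1) quot quot_proj"
  proof
    fix w assume "w \<in> mult_u ` carrier (free_mod A 1)"
    then obtain v where v: "v \<in> carrier (free_mod A 1)" "w = mult_u v" by blast
    have v0: "v 0 \<in> carrier A" using free_mod_1_coord[OF v(1)] .
    then have "v 0 \<otimes> u \<in> Au" unfolding Au_def by blast
    then have "cls (v 0 \<otimes> u) = cls \<zero>" using cls_eq_iff v0 u_closed by (simp add: minus_eq)
    then show "w \<in> lin_kernel (free_mod A 1) quot quot_proj"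
      using v v0 u_closed by (simp add: lin_kernel_def quot_proj_def mult_u_def free_mod_simps quot_simps)
  qed
next
  show "lin_kernel (free_mod A 1) quot quot_proj \<subseteq> mult_u ` carrier (free_mod A 1)"
  proof
    fix w assume "w \<in> lin_kernel (free_mod A 1) quot quot_proj"
    then have w: "w \<in> carrier (free_mod A 1)" and "cls (w 0) = cls \<zero>"
      by (auto simp: lin_kernel_def quot_proj_def quot_simps)
    then have "w 0 \<in> Au" using cls_eq_iff free_mod_1_coord[OF w] by (simp add: minus_eq)
    then obtain a where a: "a \<in> carrier A" "w 0 = a \<otimes> u" unfolding Au_def by blast
    have "mult_u (free1 a) = w"
    proof
      fix i show "mult_u (free1 a) i = w i"
        using a w by (cases "i < 1") (auto simp: mult_u_def free1_def free_mod_simps)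
    qed
    then show "w \<in> mult_u ` carrier (free_mod A 1)" using free1_closed[OF a(1)] by blast
  qed
qed

lemma quot_fin_presented: "fin_presented A quot"
  unfolding fin_presented_def
  using quot_left_module quot_proj_lin_hom quot_proj_surj mult_u_lin_hom image_mult_u by blast

lemma quot_not_smult_exact:
  assumes \<phi>: "\<phi> \<in> ring_hom A B" and B: "\<one>\<^bsub>B\<^esub> \<noteq> \<zero>\<^bsub>B\<^esub>" "ring B"
    and N: "N \<in> carrier A" and \<phi>_u: "\<phi> u = \<zero>\<^bsub>B\<^esub>" and \<phi>_N: "\<phi> N = \<zero>\<^bsub>B\<^esub>"
  shows "\<not> smult_exact quot (carrier quot) u N"
proof
  interpret B: ring B by fact
  assume exact: "smult_exact quot (carrier quot) u N"
  have "u = \<one> \<otimes> u" using u_closed by simp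
  then have "u \<in> Au" unfolding Au_def by blast
  then have "cls u = cls \<zero>" using cls_eq_iff u_closed by (simp add: minus_eq)
  then have "u \<odot>\<^bsub>quot\<^esub> cls \<one> = \<zero>\<^bsub>quot\<^esub>" using cls_smult u_closed by (simp add: quot_simps)
  then obtain Y where "Y \<in> carrier quot" "cls \<one> = N \<odot>\<^bsub>quot\<^esub> Y"
    using exact cls_closed[OF one_closed] unfolding smult_exact_def by blast
  then obtain y where y: "y \<in> carrier A" "cls \<one> = cls (N \<otimes> y)"
    using cls_smult N by (metis quotE)
  then have "\<one> \<ominus> N \<otimes> y \<in> Au" using cls_eq_iff N by simp
  then obtain a where a: "a \<in> carrier A" "\<one> \<ominus> N \<otimes> y = a \<otimes> u" unfolding Au_def by blast
  have "\<one> = (\<one> \<ominus> N \<otimes> y) \<oplus> N \<otimes> y"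
    using N y by (simp add: minus_eq a_assoc l_neg)
  then have "\<one> = a \<otimes> u \<oplus> N \<otimes> y" using a by simp
  then have "\<phi> \<one> = \<phi> a \<otimes>\<^bsub>B\<^esub> \<phi> u \<oplus>\<^bsub>B\<^esub> \<phi> N \<otimes>\<^bsub>B\<^esub> \<phi> y"
    using a N y u_closed ring_hom_add[OF \<phi>] ring_hom_mult[OF \<phi>] by (metis m_closed)
  also have "\<dots> = \<zero>\<^bsub>B\<^esub>"
    using a y ring_hom_closed[OF \<phi>] by (simp add: \<phi>_u \<phi>_N)
  finally show False using B(1) ring_hom_one[OF \<phi>] by simp
qed

end

lemma not_regular_coherent_ringI:
  assumes A: "ring A" and u: "u \<in> carrier A" and N: "N \<in> carrier A"
    and uN: "u \<otimes>\<^bsub>A\<^esub> N = \<zero>\<^bsub>A\<^esub>" and Nu: "N \<otimes>\<^bsub>A\<^esub> u = \<zero>\<^bsub>A\<^esub>"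
    and ker_u: "\<And>a. a \<in> carrier A \<Longrightarrow> u \<otimes>\<^bsub>A\<^esub> a = \<zero>\<^bsub>A\<^esub> \<Longrightarrow> \<exists>b\<in>carrier A. a = N \<otimes>\<^bsub>A\<^esub> b"
    and ker_N: "\<And>a. a \<in> carrier A \<Longrightarrow> N \<otimes>\<^bsub>A\<^esub> a = \<zero>\<^bsub>A\<^esub> \<Longrightarrow> \<exists>b\<in>carrier A. a = u \<otimes>\<^bsub>A\<^esub> b"
    and \<phi>: "\<phi> \<in> ring_hom A B" "ring B" "\<one>\<^bsub>B\<^esub> \<noteq> \<zero>\<^bsub>B\<^esub>" "\<phi> u = \<zero>\<^bsub>B\<^esub>" "\<phi> N = \<zero>\<^bsub>B\<^esub>"
  shows "\<not> regular_coherent_ring A"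
proof
  interpret principal_quotient A u
    by (intro principal_quotient.intro principal_quotient_axioms.intro A u)
  assume "regular_coherent_ring A"
  then have "has_fin_proj_res A quot"
    using quot_fin_presented unfolding regular_coherent_ring_def by blast
  then have "smult_exact quot (carrier quot) u N"
    using fin_proj_res_smult_exact[OF A u N uN Nu ker_u ker_N _ quot_left_module] by blast
  then show False using quot_not_smult_exact[OF \<phi>(1) \<phi>(3) \<phi>(2) N \<phi>(4,5)] by blast
qed

section \<open>Group rings and the augmentation\<close>

lemma (in abelian_monoid) finsum_swap:
  assumes "finite A" "finite B" "\<And>x y. x \<in> A \<Longrightarrow> y \<in> B \<Longrightarrow> F x y \<in> carrier G"
  shows "(\<Oplus>x\<in>A. \<Oplus>y\<in>B. F x y) = (\<Oplus>y\<in>B. \<Oplus>x\<in>A. F x y)"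
  using assms(1,3)
proof (induction A rule: finite_induct)
  case empty
  then show ?case by (simp add: finsum_zero)
next
  case (insert a A)
  have "(\<Oplus>x\<in>insert a A. \<Oplus>y\<in>B. F x y) = (\<Oplus>y\<in>B. F a y) \<oplus> (\<Oplus>x\<in>A. \<Oplus>y\<in>B. F x y)"
    using insert assms(2) by (intro finsum_insert) (auto intro!: finsum_closed)
  also have "(\<Oplus>x\<in>A. \<Oplus>y\<in>B. F x y) = (\<Oplus>y\<in>B. \<Oplus>x\<in>A. F x y)"
    using insert by blast
  also have "(\<Oplus>y\<in>B. F a y) \<oplus> (\<Oplus>y\<in>B. \<Oplus>x\<in>A. F x y) = (\<Oplus>y\<in>B. F a y \<oplus> (\<Oplus>x\<in>A. F x y))"
    using insert assms(2) by (intro finsum_addf[symmetric]) (auto intro!: finsum_closed)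
  also have "\<dots> = (\<Oplus>y\<in>B. \<Oplus>x\<in>insert a A. F x y)"
    using insert assms(2) by (intro finsum_cong') (auto intro!: finsum_closed simp: finsum_insert)
  finally show ?case .
qed

lemma (in abelian_monoid) finsum_nonzero_term:
  assumes "finsum G f A \<noteq> \<zero>"
  shows "\<exists>x\<in>A. f x \<noteq> \<zero>"
proof (rule ccontr)
  assume "\<not> ?thesis"
  then have "finsum G f A = (\<Oplus>x\<in>A. \<zero>)" by (intro finsum_cong') auto
  then show False using assms by (simp add: finsum_zero)
qed

lemma (in abelian_monoid) finsum_if_eq:
  assumes "finite A" "a \<in> carrier G"
  shows "(\<Oplus>y\<in>A. if c = y then a else \<zero>) = (if c \<in> A then a else \<zero>)"
proof (cases "c \<in> A")
  case True
  then show ?thesis using finsum_singleton[OF True assms(1), of "\<lambda>_. a"] assms(2) by simp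
next
  case False
  then have "(\<Oplus>y\<in>A. if c = y then a else \<zero>) = (\<Oplus>y\<in>A. \<zero>)" by (intro finsum_cong') auto
  then show ?thesis using False by (simp add: finsum_zero)
qed

locale group_algebra = G: group G + R: ring R
  for G :: "('g, 'e) monoid_scheme" and R :: "('r, 'c) ring_scheme"
begin

abbreviation RG :: "('g \<Rightarrow> 'r) ring" where "RG \<equiv> group_ring R G"

lemma RG_simps:
  "carrier RG = {f. (\<forall>x\<in>carrier G. f x \<in> carrier R) \<and> (\<forall>x. x \<notin> carrier G \<longrightarrow> f x = \<zero>\<^bsub>R\<^esub>)
                    \<and> finite {x. f x \<noteq> \<zero>\<^bsub>R\<^esub>}}"
  "f \<otimes>\<^bsub>RG\<^esub> g = (\<lambda>x. if x \<in> carrier G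
     then \<Oplus>\<^bsub>R\<^esub>y\<in>{y \<in> carrier G. f y \<noteq> \<zero>\<^bsub>R\<^esub>}. f y \<otimes>\<^bsub>R\<^esub> g (inv\<^bsub>G\<^esub> y \<otimes>\<^bsub>G\<^esub> x) else \<zero>\<^bsub>R\<^esub>)"
  "f \<oplus>\<^bsub>RG\<^esub> g = (\<lambda>x. if x \<in> carrier G then f x \<oplus>\<^bsub>R\<^esub> g x else \<zero>\<^bsub>R\<^esub>)"
  "\<zero>\<^bsub>RG\<^esub> = (\<lambda>_. \<zero>\<^bsub>R\<^esub>)"
  "\<one>\<^bsub>RG\<^esub> = (\<lambda>x. if x = \<one>\<^bsub>G\<^esub> then \<one>\<^bsub>R\<^esub> else \<zero>\<^bsub>R\<^esub>)"
  by (simp_all add: group_ring_def)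

lemma RG_coeff_closed: "f \<in> carrier RG \<Longrightarrow> f x \<in> carrier R"
  by (cases "x \<in> carrier G") (auto simp: RG_simps)

lemma RG_coeff_outside: "f \<in> carrier RG \<Longrightarrow> x \<notin> carrier G \<Longrightarrow> f x = \<zero>\<^bsub>R\<^esub>"
  by (auto simp: RG_simps)

lemma RG_finite_support: "f \<in> carrier RG \<Longrightarrow> finite {x. f x \<noteq> \<zero>\<^bsub>R\<^esub>}"
  by (auto simp: RG_simps)

lemma RG_memI:
  assumes "\<And>x. f x \<in> carrier R" "\<And>x. x \<notin> carrier G \<Longrightarrow> f x = \<zero>\<^bsub>R\<^esub>" "finite {x. f x \<noteq> \<zero>\<^bsub>R\<^esub>}"
  shows "f \<in> carrier RG"
  using assms by (simp add: RG_simps)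

definition supp :: "('g \<Rightarrow> 'r) \<Rightarrow> 'g set" where
  "supp f = {x \<in> carrier G. f x \<noteq> \<zero>\<^bsub>R\<^esub>}"

definition augmentation :: "('g \<Rightarrow> 'r) \<Rightarrow> 'r" where
  "augmentation f = (\<Oplus>\<^bsub>R\<^esub>x\<in>supp f. f x)"

lemma supp_finite: "f \<in> carrier RG \<Longrightarrow> finite (supp f)"
  unfolding supp_def by (rule finite_subset[OF _ RG_finite_support]) auto

lemma supp_subset: "supp f \<subseteq> carrier G"
  by (auto simp: supp_def)

lemma augmentation_eq_finsum:
  assumes "\<And>x. f x \<in> carrier R" "finite T" "supp f \<subseteq> T" "T \<subseteq> carrier G"
  shows "augmentation f = (\<Oplus>\<^bsub>R\<^esub>x\<in>T. f x)"
  unfolding augmentation_def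
  by (rule R.add.finprod_mono_neutral_cong_left) (use assms in \<open>auto simp: supp_def\<close>)

lemma augmentation_closed: "f \<in> carrier RG \<Longrightarrow> augmentation f \<in> carrier R"
  unfolding augmentation_def using RG_coeff_closed by (intro R.finsum_closed) auto

lemma augmentation_add:
  assumes f: "f \<in> carrier RG" and g: "g \<in> carrier RG"
  shows "augmentation (f \<oplus>\<^bsub>RG\<^esub> g) = augmentation f \<oplus>\<^bsub>R\<^esub> augmentation g"
proof -
  define T where "T = supp f \<union> supp g"
  have T: "finite T" "T \<subseteq> carrier G" using supp_finite f g supp_subset by (auto simp: T_def)
  have fg: "\<And>x. f x \<in> carrier R" "\<And>x. g x \<in> carrier R" using RG_coeff_closed f g by auto
  have "augmentation (f \<oplus>\<^bsub>RG\<^esub> g) = (\<Oplus>\<^bsub>R\<^esub>x\<in>T. (f \<oplus>\<^bsub>RG\<^esub> g) x)"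
    using fg T by (intro augmentation_eq_finsum) (auto simp: RG_simps T_def supp_def)
  also have "\<dots> = (\<Oplus>\<^bsub>R\<^esub>x\<in>T. f x \<oplus>\<^bsub>R\<^esub> g x)"
    using T fg by (intro R.finsum_cong') (auto simp: RG_simps)
  also have "\<dots> = (\<Oplus>\<^bsub>R\<^esub>x\<in>T. f x) \<oplus>\<^bsub>R\<^esub> (\<Oplus>\<^bsub>R\<^esub>x\<in>T. g x)"
    using fg by (intro R.finsum_addf) auto
  also have "\<dots> = augmentation f \<oplus>\<^bsub>R\<^esub> augmentation g"
    using augmentation_eq_finsum[OF fg(1) T(1) _ T(2)] augmentation_eq_finsum[OF fg(2) T(1) _ T(2)]
    by (simp add: T_def)
  finally show ?thesis .
qed

lemma RG_mult_eq:
  "f \<otimes>\<^bsub>RG\<^esub> g = (\<lambda>x. if x \<in> carrier G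
      then \<Oplus>\<^bsub>R\<^esub>y\<in>supp f. f y \<otimes>\<^bsub>R\<^esub> g (inv\<^bsub>G\<^esub> y \<otimes>\<^bsub>G\<^esub> x) else \<zero>\<^bsub>R\<^esub>)"
  by (simp only: RG_simps(2) supp_def)

lemma supp_mult_subset:
  assumes f: "f \<in> carrier RG" and g: "g \<in> carrier RG"
  shows "supp (f \<otimes>\<^bsub>RG\<^esub> g) \<subseteq> (\<lambda>(y, z). y \<otimes>\<^bsub>G\<^esub> z) ` (supp f \<times> supp g)"
proof
  fix x assume "x \<in> supp (f \<otimes>\<^bsub>RG\<^esub> g)"
  then have x: "x \<in> carrier G"
    and "(\<Oplus>\<^bsub>R\<^esub>y\<in>supp f. f y \<otimes>\<^bsub>R\<^esub> g (inv\<^bsub>G\<^esub> y \<otimes>\<^bsub>G\<^esub> x)) \<noteq> \<zero>\<^bsub>R\<^esub>"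
    unfolding supp_def RG_mult_eq by auto
  then obtain y where y: "y \<in> supp f" "f y \<otimes>\<^bsub>R\<^esub> g (inv\<^bsub>G\<^esub> y \<otimes>\<^bsub>G\<^esub> x) \<noteq> \<zero>\<^bsub>R\<^esub>"
    using R.finsum_nonzero_term by blast
  have yG: "y \<in> carrier G" using y supp_subset by blast
  then have "inv\<^bsub>G\<^esub> y \<otimes>\<^bsub>G\<^esub> x \<in> supp g"
    using y(2) x RG_coeff_closed[OF f] by (auto simp: supp_def)
  moreover have "x = y \<otimes>\<^bsub>G\<^esub> (inv\<^bsub>G\<^esub> y \<otimes>\<^bsub>G\<^esub> x)" using yG x by (simp add: G.m_assoc[symmetric])
  ultimately show "x \<in> (\<lambda>(y, z). y \<otimes>\<^bsub>G\<^esub> z) ` (supp f \<times> supp g)" using y(1) by force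
qed

lemma augmentation_translate:
  assumes g: "g \<in> carrier RG" and y: "y \<in> carrier G" and T: "finite T" "T \<subseteq> carrier G"
    and supp_g: "(\<lambda>z. y \<otimes>\<^bsub>G\<^esub> z) ` supp g \<subseteq> T"
  shows "(\<Oplus>\<^bsub>R\<^esub>x\<in>T. g (inv\<^bsub>G\<^esub> y \<otimes>\<^bsub>G\<^esub> x)) = augmentation g"
proof -
  have inj: "inj_on (\<lambda>x. inv\<^bsub>G\<^esub> y \<otimes>\<^bsub>G\<^esub> x) T"
    using T(2) y by (intro inj_onI) (auto simp: subset_iff)
  have "supp g \<subseteq> (\<lambda>x. inv\<^bsub>G\<^esub> y \<otimes>\<^bsub>G\<^esub> x) ` T"
  proof
    fix z assume z: "z \<in> supp g"
    then have "z \<in> carrier G" using supp_subset by blast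
    then have "z = inv\<^bsub>G\<^esub> y \<otimes>\<^bsub>G\<^esub> (y \<otimes>\<^bsub>G\<^esub> z)" using y by (simp add: G.m_assoc[symmetric])
    then show "z \<in> (\<lambda>x. inv\<^bsub>G\<^esub> y \<otimes>\<^bsub>G\<^esub> x) ` T" using supp_g z by blast
  qed
  then have "augmentation g = (\<Oplus>\<^bsub>R\<^esub>x\<in>(\<lambda>x. inv\<^bsub>G\<^esub> y \<otimes>\<^bsub>G\<^esub> x) ` T. g x)"
    using T y RG_coeff_closed[OF g] by (intro augmentation_eq_finsum) auto
  also have "\<dots> = (\<Oplus>\<^bsub>R\<^esub>x\<in>T. g (inv\<^bsub>G\<^esub> y \<otimes>\<^bsub>G\<^esub> x))"
    using inj RG_coeff_closed[OF g] by (subst R.finsum_reindex) auto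
  finally show ?thesis by simp
qed

lemma augmentation_mult:
  assumes f: "f \<in> carrier RG" and g: "g \<in> carrier RG"
  shows "augmentation (f \<otimes>\<^bsub>RG\<^esub> g) = augmentation f \<otimes>\<^bsub>R\<^esub> augmentation g"
proof -
  have fc: "\<And>x. f x \<in> carrier R" and gc: "\<And>x. g x \<in> carrier R" using RG_coeff_closed f g by auto
  define T where "T = (\<lambda>(y, z). y \<otimes>\<^bsub>G\<^esub> z) ` (supp f \<times> supp g)"
  have T: "finite T" "T \<subseteq> carrier G"
    unfolding T_def using supp_finite f g supp_subset by auto
  have fg_closed: "\<And>x. (f \<otimes>\<^bsub>RG\<^esub> g) x \<in> carrier R"
    unfolding RG_mult_eq using fc gc by (auto intro!: R.finsum_closed)
  have "augmentation (f \<otimes>\<^bsub>RG\<^esub> g) = (\<Oplus>\<^bsub>R\<^esub>x\<in>T. (f \<otimes>\<^bsub>RG\<^esub> g) x)"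
    using augmentation_eq_finsum[OF fg_closed T(1) supp_mult_subset[OF f g, folded T_def] T(2)] .
  also have "\<dots> = (\<Oplus>\<^bsub>R\<^esub>x\<in>T. \<Oplus>\<^bsub>R\<^esub>y\<in>supp f. f y \<otimes>\<^bsub>R\<^esub> g (inv\<^bsub>G\<^esub> y \<otimes>\<^bsub>G\<^esub> x))"
    using T fc gc by (intro R.finsum_cong') (auto simp: RG_mult_eq intro!: R.finsum_closed)
  also have "\<dots> = (\<Oplus>\<^bsub>R\<^esub>y\<in>supp f. \<Oplus>\<^bsub>R\<^esub>x\<in>T. f y \<otimes>\<^bsub>R\<^esub> g (inv\<^bsub>G\<^esub> y \<otimes>\<^bsub>G\<^esub> x))"
    using T supp_finite[OF f] fc gc by (intro R.finsum_swap) auto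
  also have "\<dots> = (\<Oplus>\<^bsub>R\<^esub>y\<in>supp f. f y \<otimes>\<^bsub>R\<^esub> augmentation g)"
  proof (intro R.finsum_cong')
    fix y assume y: "y \<in> supp f"
    then have "(\<lambda>z. y \<otimes>\<^bsub>G\<^esub> z) ` supp g \<subseteq> T" by (auto simp: T_def)
    then have "(\<Oplus>\<^bsub>R\<^esub>x\<in>T. g (inv\<^bsub>G\<^esub> y \<otimes>\<^bsub>G\<^esub> x)) = augmentation g"
      using augmentation_translate[OF g _ T] y supp_subset by blast
    moreover have "(\<Oplus>\<^bsub>R\<^esub>x\<in>T. f y \<otimes>\<^bsub>R\<^esub> g (inv\<^bsub>G\<^esub> y \<otimes>\<^bsub>G\<^esub> x))
        = f y \<otimes>\<^bsub>R\<^esub> (\<Oplus>\<^bsub>R\<^esub>x\<in>T. g (inv\<^bsub>G\<^esub> y \<otimes>\<^bsub>G\<^esub> x))"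
      using T fc gc by (intro R.finsum_rdistr[symmetric]) auto
    ultimately show "(\<Oplus>\<^bsub>R\<^esub>x\<in>T. f y \<otimes>\<^bsub>R\<^esub> g (inv\<^bsub>G\<^esub> y \<otimes>\<^bsub>G\<^esub> x)) = f y \<otimes>\<^bsub>R\<^esub> augmentation g"
      by simp
  qed (use fc augmentation_closed[OF g] in auto)
  also have "\<dots> = augmentation f \<otimes>\<^bsub>R\<^esub> augmentation g"
    unfolding augmentation_def using supp_finite[OF f] fc gc augmentation_closed[OF g]
    by (intro R.finsum_ldistr[symmetric]) (auto simp: augmentation_def)
  finally show ?thesis .
qed

lemma one_RG: "\<one>\<^bsub>RG\<^esub> \<in> carrier RG"
proof (rule RG_memI)
  show "finite {x. \<one>\<^bsub>RG\<^esub> x \<noteq> \<zero>\<^bsub>R\<^esub>}"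
    by (rule finite_subset[of _ "{\<one>\<^bsub>G\<^esub>}"]) (auto simp: RG_simps)
qed (auto simp: RG_simps)

lemma augmentation_one: "augmentation \<one>\<^bsub>RG\<^esub> = \<one>\<^bsub>R\<^esub>"
proof (cases "\<one>\<^bsub>R\<^esub> = \<zero>\<^bsub>R\<^esub>")
  case True
  then show ?thesis
    using augmentation_closed[OF one_RG] R.carrier_one_zero by simp
next
  case False
  then have "supp \<one>\<^bsub>RG\<^esub> = {\<one>\<^bsub>G\<^esub>}" by (auto simp: supp_def RG_simps)
  then show ?thesis by (simp add: augmentation_def RG_simps)
qed

lemma augmentation_ring_hom: "augmentation \<in> ring_hom RG R"
  by (rule ring_hom_memI)
     (simp_all add: augmentation_closed augmentation_mult augmentation_add augmentation_one)

end

lemma (in group) torsion_imp_prime_order_elem: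
  assumes g: "g \<in> carrier G" and n: "(n::nat) > 0" "g [^] n = \<one>" and g1: "g \<noteq> \<one>"
  shows "\<exists>h \<in> carrier G. prime (ord h)"
proof -
  have "ord g dvd n" using n pow_eq_id[OF g] by simp
  then have "ord g \<noteq> 0" using n by auto
  moreover have "ord g \<noteq> 1" using ord_eq_1[OF g] g1 by simp
  ultimately obtain p where p: "prime p" "p dvd ord g" using prime_factor_nat by blast
  then obtain k where k: "ord g = p * k" by blast
  then have "ord (g [^] k) = p"
    using ord_pow[OF g, of k] \<open>ord g \<noteq> 0\<close> by simp
  then show ?thesis using p g by (metis nat_pow_closed)
qed

locale prime_order_elem = group_algebra G R for G :: "('g, 'e) monoid_scheme" and R :: "('r, 'c) ring_scheme" +
  fixes h :: 'g and p :: nat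
  assumes h_closed: "h \<in> carrier G" and ord_h: "G.ord h = p" and prime_p: "prime p"
    and char_p: "add_pow R p \<one>\<^bsub>R\<^esub> = \<zero>\<^bsub>R\<^esub>" and one_ne_zero: "\<one>\<^bsub>R\<^esub> \<noteq> \<zero>\<^bsub>R\<^esub>"
begin

lemma p_ge_2: "p \<ge> 2"
  using prime_ge_2_nat[OF prime_p] .

lemma h_pow_p: "h [^]\<^bsub>G\<^esub> p = \<one>\<^bsub>G\<^esub>"
  using G.pow_ord_eq_1[OF h_closed] by (simp add: ord_h)

lemma h_pow_inj: "inj_on (\<lambda>i. h [^]\<^bsub>G\<^esub> i) {..<p}"
proof -
  have "{0..G.ord h - 1} = {..<p}" using p_ge_2 by (auto simp: ord_h)
  then show ?thesis using G.ord_inj[OF h_closed] by simp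
qed

lemma h_ne_one: "h \<noteq> \<one>\<^bsub>G\<^esub>"
  using G.ord_eq_1[OF h_closed] p_ge_2 by (simp add: ord_h)

lemma h_pow_closed [simp]: "h [^]\<^bsub>G\<^esub> (i::nat) \<in> carrier G"
  using h_closed by simp

definition H :: "'g set" where "H = (\<lambda>i. h [^]\<^bsub>G\<^esub> i) ` {..<p}"

lemma h_pow_in_H: "h [^]\<^bsub>G\<^esub> (n::nat) \<in> H"
proof -
  have "h [^]\<^bsub>G\<^esub> n = h [^]\<^bsub>G\<^esub> (p * (n div p)) \<otimes>\<^bsub>G\<^esub> h [^]\<^bsub>G\<^esub> (n mod p)"
    by (simp add: G.nat_pow_mult h_closed)
  also have "h [^]\<^bsub>G\<^esub> (p * (n div p)) = \<one>\<^bsub>G\<^esub>"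
    by (simp add: G.nat_pow_pow[OF h_closed, symmetric] h_pow_p)
  finally show ?thesis using p_ge_2 by (simp add: H_def)
qed

lemma H_subset: "H \<subseteq> carrier G"
  unfolding H_def by auto

lemma card_H: "card H = p"
  unfolding H_def using card_image[OF h_pow_inj] by simp

lemma finite_H: "finite H"
  unfolding H_def by simp

lemma h_in_H: "h \<in> H"
  using h_pow_in_H[of 1] h_closed by simp

lemma inv_h_pow: "i \<le> p \<Longrightarrow> inv\<^bsub>G\<^esub> (h [^]\<^bsub>G\<^esub> i) = h [^]\<^bsub>G\<^esub> (p - i)"
  by (rule G.inv_equality) (auto simp: G.nat_pow_mult h_closed h_pow_p)

lemma subgroup_H: "subgroup H G"
proof (rule G.subgroupI)
  show "H \<subseteq> carrier G" by (rule H_subset)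
  show "H \<noteq> {}" using h_in_H by blast
next
  fix x assume "x \<in> H"
  then obtain i where "i < p" "x = h [^]\<^bsub>G\<^esub> i" unfolding H_def by blast
  then show "inv\<^bsub>G\<^esub> x \<in> H" using inv_h_pow[of i] h_pow_in_H by simp
next
  fix x y assume "x \<in> H" "y \<in> H"
  then obtain i j :: nat where "x = h [^]\<^bsub>G\<^esub> i" "y = h [^]\<^bsub>G\<^esub> j" unfolding H_def by blast
  then show "x \<otimes>\<^bsub>G\<^esub> y \<in> H" using h_pow_in_H by (simp add: G.nat_pow_mult h_closed)
qed

lemma r_coset_eq_image: "H #>\<^bsub>G\<^esub> x = (\<lambda>y. y \<otimes>\<^bsub>G\<^esub> x) ` H"
  by (auto simp: r_coset_def)

definition coset_rep :: "'g \<Rightarrow> 'g" where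
  "coset_rep x = (SOME t. t \<in> H #>\<^bsub>G\<^esub> x)"

definition coset_exp :: "'g \<Rightarrow> nat" where
  "coset_exp x = (THE j. j < p \<and> h [^]\<^bsub>G\<^esub> j \<otimes>\<^bsub>G\<^esub> coset_rep x = x)"

lemma coset_rep_in: "x \<in> carrier G \<Longrightarrow> coset_rep x \<in> H #>\<^bsub>G\<^esub> x"
  unfolding coset_rep_def using G.rcos_self[OF _ subgroup_H] by (rule someI)

lemma coset_rep_closed: "x \<in> carrier G \<Longrightarrow> coset_rep x \<in> carrier G"
  using coset_rep_in G.r_coset_subset_G[OF H_subset] by blast

lemma coset_rep_eq: "x \<in> carrier G \<Longrightarrow> y \<in> H #>\<^bsub>G\<^esub> x \<Longrightarrow> coset_rep y = coset_rep x"
  unfolding coset_rep_def using G.repr_independence[OF _ _ subgroup_H] by simp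

lemma in_coset_rep: "x \<in> carrier G \<Longrightarrow> x \<in> H #>\<^bsub>G\<^esub> coset_rep x"
  using G.repr_independence[OF coset_rep_in _ subgroup_H] G.rcos_self[OF _ subgroup_H] by simp

lemma coset_exp_unique:
  assumes x: "x \<in> carrier G" and j: "j < p" "h [^]\<^bsub>G\<^esub> j \<otimes>\<^bsub>G\<^esub> coset_rep x = x"
    and k: "k < p" "h [^]\<^bsub>G\<^esub> k \<otimes>\<^bsub>G\<^esub> coset_rep x = x"
  shows "j = k"
proof -
  have "h [^]\<^bsub>G\<^esub> j \<otimes>\<^bsub>G\<^esub> coset_rep x = h [^]\<^bsub>G\<^esub> k \<otimes>\<^bsub>G\<^esub> coset_rep x"
    using j(2) k(2) by simp
  then have "h [^]\<^bsub>G\<^esub> j = h [^]\<^bsub>G\<^esub> k" using coset_rep_closed[OF x] by simp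
  then show ?thesis using h_pow_inj j(1) k(1) by (simp add: inj_on_def)
qed

lemma coset_exp:
  assumes x: "x \<in> carrier G"
  shows "coset_exp x < p" "h [^]\<^bsub>G\<^esub> coset_exp x \<otimes>\<^bsub>G\<^esub> coset_rep x = x"
proof -
  have "x \<in> (\<lambda>y. y \<otimes>\<^bsub>G\<^esub> coset_rep x) ` H"
    using in_coset_rep[OF x] by (simp add: r_coset_eq_image)
  then obtain j where j: "j < p" "h [^]\<^bsub>G\<^esub> j \<otimes>\<^bsub>G\<^esub> coset_rep x = x"
    unfolding H_def by (auto simp del: G.nat_pow_closed)
  have "\<exists>!j. j < p \<and> h [^]\<^bsub>G\<^esub> j \<otimes>\<^bsub>G\<^esub> coset_rep x = x"
    by (rule ex1I[of _ j]) (use j coset_exp_unique[OF x] in blast)+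
  from theI'[OF this] show "coset_exp x < p" "h [^]\<^bsub>G\<^esub> coset_exp x \<otimes>\<^bsub>G\<^esub> coset_rep x = x"
    unfolding coset_exp_def by simp_all
qed

lemma coset_exp_eqI:
  "x \<in> carrier G \<Longrightarrow> j < p \<Longrightarrow> h [^]\<^bsub>G\<^esub> j \<otimes>\<^bsub>G\<^esub> coset_rep x = x \<Longrightarrow> coset_exp x = j"
  using coset_exp coset_exp_unique by metis

lemma coset_rep_inv_h_mult: "x \<in> carrier G \<Longrightarrow> coset_rep (inv\<^bsub>G\<^esub> h \<otimes>\<^bsub>G\<^esub> x) = coset_rep x"
  using coset_rep_eq G.rcosI[OF _ H_subset] subgroup.m_inv_closed[OF subgroup_H h_in_H] by blast

lemma coset_exp_inv_h_mult:
  assumes x: "x \<in> carrier G"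
  shows "coset_exp (inv\<^bsub>G\<^esub> h \<otimes>\<^bsub>G\<^esub> x) = (if coset_exp x = 0 then p - 1 else coset_exp x - 1)"
proof -
  define t where "t = coset_rep x"
  have t: "t \<in> carrier G" using coset_rep_closed[OF x] by (simp add: t_def)
  have hx: "inv\<^bsub>G\<^esub> h \<otimes>\<^bsub>G\<^esub> x \<in> carrier G" using x h_closed by simp
  have rep: "coset_rep (inv\<^bsub>G\<^esub> h \<otimes>\<^bsub>G\<^esub> x) = t" using coset_rep_inv_h_mult[OF x] by (simp add: t_def)
  show ?thesis
  proof (cases "coset_exp x")
    case 0
    then have "t = x" using coset_exp(2)[OF x] t by (simp add: t_def)
    then have "h [^]\<^bsub>G\<^esub> (p - 1) \<otimes>\<^bsub>G\<^esub> coset_rep (inv\<^bsub>G\<^esub> h \<otimes>\<^bsub>G\<^esub> x) = inv\<^bsub>G\<^esub> h \<otimes>\<^bsub>G\<^esub> x"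
      using rep inv_h_pow[of 1] p_ge_2 h_closed by simp
    then show ?thesis using coset_exp_eqI[OF hx] 0 p_ge_2 by simp
  next
    case (Suc k)
    then have "(h \<otimes>\<^bsub>G\<^esub> h [^]\<^bsub>G\<^esub> k) \<otimes>\<^bsub>G\<^esub> t = x"
      using coset_exp(2)[OF x] G.nat_pow_Suc2[OF h_closed] by (simp add: t_def)
    then have "h [^]\<^bsub>G\<^esub> k \<otimes>\<^bsub>G\<^esub> coset_rep (inv\<^bsub>G\<^esub> h \<otimes>\<^bsub>G\<^esub> x) = inv\<^bsub>G\<^esub> h \<otimes>\<^bsub>G\<^esub> x"
      using rep h_closed t by (auto simp: G.m_assoc[symmetric])
    moreover have "k < p" using Suc coset_exp(1)[OF x] by simp
    ultimately show ?thesis using coset_exp_eqI[OF hx] Suc by simp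
  qed
qed

definition u :: "'g \<Rightarrow> 'r" where
  "u = (\<lambda>x. if x = h then \<one>\<^bsub>R\<^esub> else if x = \<one>\<^bsub>G\<^esub> then \<ominus>\<^bsub>R\<^esub> \<one>\<^bsub>R\<^esub> else \<zero>\<^bsub>R\<^esub>)"

definition N :: "'g \<Rightarrow> 'r" where
  "N = (\<lambda>x. if x \<in> H then \<one>\<^bsub>R\<^esub> else \<zero>\<^bsub>R\<^esub>)"

lemma u_closed: "u \<in> carrier RG"
  by (rule RG_memI) (auto simp: u_def h_closed intro: finite_subset[of _ "{h, \<one>\<^bsub>G\<^esub>}"])

lemma N_closed: "N \<in> carrier RG"
  using H_subset finite_H by (intro RG_memI) (auto simp: N_def intro: finite_subset[of _ H])

lemma supp_u: "supp u = {h, \<one>\<^bsub>G\<^esub>}"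
  using h_closed h_ne_one one_ne_zero R.add.inv_eq_1_iff by (auto simp: supp_def u_def)

lemma supp_N: "supp N = H"
  using H_subset one_ne_zero by (auto simp: supp_def N_def)

lemma u_mult:
  assumes a: "a \<in> carrier RG" and x: "x \<in> carrier G"
  shows "(u \<otimes>\<^bsub>RG\<^esub> a) x = a (inv\<^bsub>G\<^esub> h \<otimes>\<^bsub>G\<^esub> x) \<ominus>\<^bsub>R\<^esub> a x"
proof -
  have ac: "\<And>y. a y \<in> carrier R" using RG_coeff_closed[OF a] .
  have "(u \<otimes>\<^bsub>RG\<^esub> a) x = (\<Oplus>\<^bsub>R\<^esub>y\<in>{h, \<one>\<^bsub>G\<^esub>}. u y \<otimes>\<^bsub>R\<^esub> a (inv\<^bsub>G\<^esub> y \<otimes>\<^bsub>G\<^esub> x))"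
    using x supp_u by (simp add: RG_simps supp_def)
  also have "\<dots> = a (inv\<^bsub>G\<^esub> h \<otimes>\<^bsub>G\<^esub> x) \<ominus>\<^bsub>R\<^esub> a x"
    using h_ne_one ac x by (simp add: R.finsum_insert u_def R.l_minus R.minus_eq)
  finally show ?thesis .
qed

lemma N_mult:
  assumes a: "a \<in> carrier RG" and x: "x \<in> carrier G"
  shows "(N \<otimes>\<^bsub>RG\<^esub> a) x = (\<Oplus>\<^bsub>R\<^esub>y\<in>H. a (inv\<^bsub>G\<^esub> y \<otimes>\<^bsub>G\<^esub> x))"
  using x RG_coeff_closed[OF a] supp_N unfolding RG_simps(2) supp_def
  by (auto intro!: R.finsum_cong' simp: N_def)

lemma inv_h_mult_in_H_iff:
  assumes x: "x \<in> carrier G"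
  shows "inv\<^bsub>G\<^esub> h \<otimes>\<^bsub>G\<^esub> x \<in> H \<longleftrightarrow> x \<in> H"
proof
  assume "inv\<^bsub>G\<^esub> h \<otimes>\<^bsub>G\<^esub> x \<in> H"
  then have "h \<otimes>\<^bsub>G\<^esub> (inv\<^bsub>G\<^esub> h \<otimes>\<^bsub>G\<^esub> x) \<in> H" using subgroup.m_closed[OF subgroup_H h_in_H] by blast
  then show "x \<in> H" using x h_closed by (simp add: G.m_assoc[symmetric])
next
  assume "x \<in> H"
  then show "inv\<^bsub>G\<^esub> h \<otimes>\<^bsub>G\<^esub> x \<in> H"
    using subgroup.m_closed[OF subgroup_H] subgroup.m_inv_closed[OF subgroup_H h_in_H] by blast
qed

lemma mult_inv_h_in_H_iff:
  assumes x: "x \<in> carrier G"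
  shows "x \<otimes>\<^bsub>G\<^esub> inv\<^bsub>G\<^esub> h \<in> H \<longleftrightarrow> x \<in> H"
proof
  assume "x \<otimes>\<^bsub>G\<^esub> inv\<^bsub>G\<^esub> h \<in> H"
  then have "(x \<otimes>\<^bsub>G\<^esub> inv\<^bsub>G\<^esub> h) \<otimes>\<^bsub>G\<^esub> h \<in> H" using subgroup.m_closed[OF subgroup_H _ h_in_H] by blast
  then show "x \<in> H" using x h_closed by (simp add: G.m_assoc)
next
  assume "x \<in> H"
  then show "x \<otimes>\<^bsub>G\<^esub> inv\<^bsub>G\<^esub> h \<in> H"
    using subgroup.m_closed[OF subgroup_H] subgroup.m_inv_closed[OF subgroup_H h_in_H] by blast
qed

lemma u_mult_N: "u \<otimes>\<^bsub>RG\<^esub> N = \<zero>\<^bsub>RG\<^esub>"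
proof
  fix x show "(u \<otimes>\<^bsub>RG\<^esub> N) x = \<zero>\<^bsub>RG\<^esub> x"
  proof (cases "x \<in> carrier G")
    case True
    have "(u \<otimes>\<^bsub>RG\<^esub> N) x = N (inv\<^bsub>G\<^esub> h \<otimes>\<^bsub>G\<^esub> x) \<ominus>\<^bsub>R\<^esub> N x"
      by (rule u_mult[OF N_closed True])
    also have "\<dots> = \<zero>\<^bsub>R\<^esub>"
      using inv_h_mult_in_H_iff[OF True] by (simp add: N_def R.r_neg R.minus_eq)
    finally show ?thesis by (simp add: RG_simps(4))
  qed (simp add: RG_simps(2,4))
qed

lemma N_mult_u: "N \<otimes>\<^bsub>RG\<^esub> u = \<zero>\<^bsub>RG\<^esub>"
proof
  fix x show "(N \<otimes>\<^bsub>RG\<^esub> u) x = \<zero>\<^bsub>RG\<^esub> x"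
  proof (cases "x \<in> carrier G")
    case x: True
    have "u (inv\<^bsub>G\<^esub> y \<otimes>\<^bsub>G\<^esub> x) = (if x \<otimes>\<^bsub>G\<^esub> inv\<^bsub>G\<^esub> h = y then \<one>\<^bsub>R\<^esub> else \<zero>\<^bsub>R\<^esub>)
        \<oplus>\<^bsub>R\<^esub> (if x = y then \<ominus>\<^bsub>R\<^esub> \<one>\<^bsub>R\<^esub> else \<zero>\<^bsub>R\<^esub>)" if y: "y \<in> H" for y
    proof -
      have yG: "y \<in> carrier G" using H_subset y by blast
      have "inv\<^bsub>G\<^esub> y \<otimes>\<^bsub>G\<^esub> x = h \<longleftrightarrow> x \<otimes>\<^bsub>G\<^esub> inv\<^bsub>G\<^esub> h = y"
        using G.inv_solve_left'[OF h_closed yG x] G.inv_solve_right'[OF yG x h_closed] by auto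
      moreover have "inv\<^bsub>G\<^esub> y \<otimes>\<^bsub>G\<^esub> x = \<one>\<^bsub>G\<^esub> \<longleftrightarrow> x = y"
        using G.inv_solve_left'[OF G.one_closed yG x] yG by auto
      ultimately show ?thesis using h_ne_one by (auto simp: u_def)
    qed
    then have "(N \<otimes>\<^bsub>RG\<^esub> u) x = (\<Oplus>\<^bsub>R\<^esub>y\<in>H. (if x \<otimes>\<^bsub>G\<^esub> inv\<^bsub>G\<^esub> h = y then \<one>\<^bsub>R\<^esub> else \<zero>\<^bsub>R\<^esub>)
        \<oplus>\<^bsub>R\<^esub> (if x = y then \<ominus>\<^bsub>R\<^esub> \<one>\<^bsub>R\<^esub> else \<zero>\<^bsub>R\<^esub>))"
      unfolding N_mult[OF u_closed x] by (intro R.finsum_cong') auto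
    also have "\<dots> = (\<Oplus>\<^bsub>R\<^esub>y\<in>H. if x \<otimes>\<^bsub>G\<^esub> inv\<^bsub>G\<^esub> h = y then \<one>\<^bsub>R\<^esub> else \<zero>\<^bsub>R\<^esub>)
        \<oplus>\<^bsub>R\<^esub> (\<Oplus>\<^bsub>R\<^esub>y\<in>H. if x = y then \<ominus>\<^bsub>R\<^esub> \<one>\<^bsub>R\<^esub> else \<zero>\<^bsub>R\<^esub>)"
      by (intro R.finsum_addf) auto
    also have "\<dots> = (if x \<otimes>\<^bsub>G\<^esub> inv\<^bsub>G\<^esub> h \<in> H then \<one>\<^bsub>R\<^esub> else \<zero>\<^bsub>R\<^esub>)
        \<oplus>\<^bsub>R\<^esub> (if x \<in> H then \<ominus>\<^bsub>R\<^esub> \<one>\<^bsub>R\<^esub> else \<zero>\<^bsub>R\<^esub>)"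
      using finite_H by (simp add: R.finsum_if_eq)
    also have "\<dots> = \<zero>\<^bsub>R\<^esub>" using mult_inv_h_in_H_iff[OF x] by (simp add: R.r_neg)
    finally show ?thesis by (simp add: RG_simps(4))
  qed (simp add: RG_simps(2,4))
qed

lemma augmentation_u: "augmentation u = \<zero>\<^bsub>R\<^esub>"
  using supp_u h_ne_one by (simp add: augmentation_def u_def R.finsum_insert R.r_neg)

lemma augmentation_N: "augmentation N = \<zero>\<^bsub>R\<^esub>"
proof -
  have "augmentation N = (\<Oplus>\<^bsub>R\<^esub>x\<in>H. \<one>\<^bsub>R\<^esub>)"
    unfolding augmentation_def supp_N by (intro R.finsum_cong') (auto simp: N_def)
  also have "\<dots> = add_pow R (card H) \<one>\<^bsub>R\<^esub>" by (rule R.add.finprod_const) simp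
  finally show ?thesis using char_p card_H by simp
qed

lemma shift_invariant_coset_const:
  assumes a: "a \<in> carrier RG" and shift: "\<And>x. x \<in> carrier G \<Longrightarrow> a (h \<otimes>\<^bsub>G\<^esub> x) = a x"
    and x: "x \<in> carrier G"
  shows "a (coset_rep x) = a x"
proof -
  have "a (h [^]\<^bsub>G\<^esub> j \<otimes>\<^bsub>G\<^esub> y) = a y" if "y \<in> carrier G" for j :: nat and y
    using that
  proof (induction j arbitrary: y)
    case (Suc j)
    have "h [^]\<^bsub>G\<^esub> Suc j \<otimes>\<^bsub>G\<^esub> y = h [^]\<^bsub>G\<^esub> j \<otimes>\<^bsub>G\<^esub> (h \<otimes>\<^bsub>G\<^esub> y)"
      using Suc.prems h_closed by (simp add: G.m_assoc G.nat_pow_Suc2 del: G.nat_pow_Suc)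
    then show ?case using Suc.IH[of "h \<otimes>\<^bsub>G\<^esub> y"] Suc.prems h_closed shift by simp
  qed simp
  from this[OF coset_rep_closed[OF x], of "coset_exp x"] show ?thesis
    using coset_exp(2)[OF x] by simp
qed

lemma u_mult_eq_zero_shift:
  assumes a: "a \<in> carrier RG" and ua: "u \<otimes>\<^bsub>RG\<^esub> a = \<zero>\<^bsub>RG\<^esub>" and x: "x \<in> carrier G"
  shows "a (h \<otimes>\<^bsub>G\<^esub> x) = a x"
proof -
  have hx: "h \<otimes>\<^bsub>G\<^esub> x \<in> carrier G" using x h_closed by simp
  have "(u \<otimes>\<^bsub>RG\<^esub> a) (h \<otimes>\<^bsub>G\<^esub> x) = \<zero>\<^bsub>R\<^esub>" using ua by (simp add: RG_simps(4))
  then have "a x \<ominus>\<^bsub>R\<^esub> a (h \<otimes>\<^bsub>G\<^esub> x) = \<zero>\<^bsub>R\<^esub>"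
    using u_mult[OF a hx] x h_closed by (simp add: G.m_assoc[symmetric])
  then show ?thesis using RG_coeff_closed[OF a] by simp
qed

definition rep_restrict :: "('g \<Rightarrow> 'r) \<Rightarrow> 'g \<Rightarrow> 'r" where
  "rep_restrict a x = (if x \<in> carrier G \<and> coset_rep x = x then a x else \<zero>\<^bsub>R\<^esub>)"

lemma rep_restrict_closed:
  assumes a: "a \<in> carrier RG"
  shows "rep_restrict a \<in> carrier RG"
proof -
  have "{x. rep_restrict a x \<noteq> \<zero>\<^bsub>R\<^esub>} \<subseteq> {x. a x \<noteq> \<zero>\<^bsub>R\<^esub>}" by (auto simp: rep_restrict_def)
  then show ?thesis
    using RG_coeff_closed[OF a] RG_finite_support[OF a]
    by (intro RG_memI) (auto simp: rep_restrict_def intro: finite_subset)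
qed

lemma N_mult_rep_restrict:
  assumes a: "a \<in> carrier RG" and shift: "\<And>x. x \<in> carrier G \<Longrightarrow> a (h \<otimes>\<^bsub>G\<^esub> x) = a x"
  shows "N \<otimes>\<^bsub>RG\<^esub> rep_restrict a = a"
proof
  fix x
  have ac: "\<And>y. a y \<in> carrier R" using RG_coeff_closed[OF a] .
  show "(N \<otimes>\<^bsub>RG\<^esub> rep_restrict a) x = a x"
  proof (cases "x \<in> carrier G")
    case False
    then show ?thesis using RG_coeff_outside[OF a] by (simp add: RG_simps(2))
  next
    case x: True
    obtain z where z: "z \<in> H" "coset_rep x = z \<otimes>\<^bsub>G\<^esub> x"
      using coset_rep_in[OF x] unfolding r_coset_eq_image by blast
    have zG: "z \<in> carrier G" using z(1) H_subset by blast
    have "rep_restrict a (inv\<^bsub>G\<^esub> y \<otimes>\<^bsub>G\<^esub> x) = (if inv\<^bsub>G\<^esub> z = y then a x else \<zero>\<^bsub>R\<^esub>)"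
      if y: "y \<in> H" for y
    proof -
      have yG: "y \<in> carrier G" using H_subset y by blast
      have "inv\<^bsub>G\<^esub> y \<otimes>\<^bsub>G\<^esub> x \<in> H #>\<^bsub>G\<^esub> x"
        using G.rcosI[OF subgroup.m_inv_closed[OF subgroup_H y] H_subset x] .
      then have rep: "coset_rep (inv\<^bsub>G\<^esub> y \<otimes>\<^bsub>G\<^esub> x) = z \<otimes>\<^bsub>G\<^esub> x"
        using coset_rep_eq[OF x] z(2) by simp
      have "inv\<^bsub>G\<^esub> y \<otimes>\<^bsub>G\<^esub> x = z \<otimes>\<^bsub>G\<^esub> x \<longleftrightarrow> inv\<^bsub>G\<^esub> y = z" using yG zG x by simp
      also have "\<dots> \<longleftrightarrow> inv\<^bsub>G\<^esub> z = y" using yG zG by (metis G.inv_inv)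
      finally have iff: "inv\<^bsub>G\<^esub> y \<otimes>\<^bsub>G\<^esub> x = z \<otimes>\<^bsub>G\<^esub> x \<longleftrightarrow> inv\<^bsub>G\<^esub> z = y" .
      show ?thesis
      proof (cases "inv\<^bsub>G\<^esub> z = y")
        case True
        then have "rep_restrict a (inv\<^bsub>G\<^esub> y \<otimes>\<^bsub>G\<^esub> x) = a (coset_rep x)"
          using iff rep zG x z(2) by (simp add: rep_restrict_def)
        then show ?thesis using True shift_invariant_coset_const[OF a shift x] by simp
      qed (use iff rep in \<open>simp add: rep_restrict_def\<close>)
    qed
    then have "(N \<otimes>\<^bsub>RG\<^esub> rep_restrict a) x = (\<Oplus>\<^bsub>R\<^esub>y\<in>H. if inv\<^bsub>G\<^esub> z = y then a x else \<zero>\<^bsub>R\<^esub>)"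
      unfolding N_mult[OF rep_restrict_closed[OF a] x] by (intro R.finsum_cong') (auto simp: ac)
    also have "\<dots> = a x"
      using R.finsum_if_eq[OF finite_H ac] subgroup.m_inv_closed[OF subgroup_H z(1)] by simp
    finally show ?thesis .
  qed
qed

lemma ker_u:
  assumes a: "a \<in> carrier RG" and ua: "u \<otimes>\<^bsub>RG\<^esub> a = \<zero>\<^bsub>RG\<^esub>"
  shows "\<exists>b\<in>carrier RG. a = N \<otimes>\<^bsub>RG\<^esub> b"
  using rep_restrict_closed[OF a] N_mult_rep_restrict[OF a u_mult_eq_zero_shift[OF a ua]] by metis

lemma coset_sum_zero:
  assumes a: "a \<in> carrier RG" and Na: "N \<otimes>\<^bsub>RG\<^esub> a = \<zero>\<^bsub>RG\<^esub>" and t: "t \<in> carrier G"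
  shows "(\<Oplus>\<^bsub>R\<^esub>i\<in>{..<p}. a (h [^]\<^bsub>G\<^esub> i \<otimes>\<^bsub>G\<^esub> t)) = \<zero>\<^bsub>R\<^esub>"
proof -
  have ac: "\<And>y. a y \<in> carrier R" using RG_coeff_closed[OF a] .
  have inv_H: "(\<lambda>y. inv\<^bsub>G\<^esub> y) ` H = H"
  proof
    show "(\<lambda>y. inv\<^bsub>G\<^esub> y) ` H \<subseteq> H" using subgroup.m_inv_closed[OF subgroup_H] by blast
    show "H \<subseteq> (\<lambda>y. inv\<^bsub>G\<^esub> y) ` H"
    proof
      fix y assume y: "y \<in> H"
      then have "y = inv\<^bsub>G\<^esub> (inv\<^bsub>G\<^esub> y)" using H_subset by auto
      then show "y \<in> (\<lambda>y. inv\<^bsub>G\<^esub> y) ` H" using subgroup.m_inv_closed[OF subgroup_H y] by blast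
    qed
  qed
  have inj_inv: "inj_on (\<lambda>y. inv\<^bsub>G\<^esub> y) H" using G.inv_inj H_subset inj_on_subset by blast
  have "(\<Oplus>\<^bsub>R\<^esub>i\<in>{..<p}. a (h [^]\<^bsub>G\<^esub> i \<otimes>\<^bsub>G\<^esub> t)) = (\<Oplus>\<^bsub>R\<^esub>y\<in>H. a (y \<otimes>\<^bsub>G\<^esub> t))"
    unfolding H_def using h_pow_inj ac by (subst R.finsum_reindex) auto
  also have "\<dots> = (\<Oplus>\<^bsub>R\<^esub>y\<in>(\<lambda>y. inv\<^bsub>G\<^esub> y) ` H. a (y \<otimes>\<^bsub>G\<^esub> t))" using inv_H by simp
  also have "\<dots> = (\<Oplus>\<^bsub>R\<^esub>y\<in>H. a (inv\<^bsub>G\<^esub> y \<otimes>\<^bsub>G\<^esub> t))"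
    using inj_inv ac by (subst R.finsum_reindex) auto
  also have "\<dots> = (N \<otimes>\<^bsub>RG\<^esub> a) t" using N_mult[OF a t] by simp
  finally show ?thesis using Na by (simp add: RG_simps(4))
qed

definition partial_sum :: "('g \<Rightarrow> 'r) \<Rightarrow> 'g \<Rightarrow> nat \<Rightarrow> 'r" where
  "partial_sum a t j = (\<Oplus>\<^bsub>R\<^esub>i\<in>{1..j}. a (h [^]\<^bsub>G\<^esub> i \<otimes>\<^bsub>G\<^esub> t))"

text \<open>Since \<open>u = h - 1\<close>, minus the partial sums of \<open>a\<close> along each coset telescope under
  multiplication by \<open>u\<close>; they close up at the representative when the sum over the coset vanishes.\<close>
definition u_antiderivative :: "('g \<Rightarrow> 'r) \<Rightarrow> 'g \<Rightarrow> 'r" where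
  "u_antiderivative a x =
     (if x \<in> carrier G then \<ominus>\<^bsub>R\<^esub> partial_sum a (coset_rep x) (coset_exp x) else \<zero>\<^bsub>R\<^esub>)"

lemma partial_sum_closed: "a \<in> carrier RG \<Longrightarrow> partial_sum a t j \<in> carrier R"
  unfolding partial_sum_def using RG_coeff_closed by (intro R.finsum_closed) auto

lemma u_antiderivative_closed:
  assumes a: "a \<in> carrier RG"
  shows "u_antiderivative a \<in> carrier RG"
proof -
  have "{x. u_antiderivative a x \<noteq> \<zero>\<^bsub>R\<^esub>} \<subseteq> (\<Union>z\<in>{z. a z \<noteq> \<zero>\<^bsub>R\<^esub>}. H #>\<^bsub>G\<^esub> z)"
  proof
    fix x assume "x \<in> {x. u_antiderivative a x \<noteq> \<zero>\<^bsub>R\<^esub>}"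
    then have x: "x \<in> carrier G" and "partial_sum a (coset_rep x) (coset_exp x) \<noteq> \<zero>\<^bsub>R\<^esub>"
      by (auto simp: u_antiderivative_def split: if_splits)
    then obtain i :: nat where i: "a (h [^]\<^bsub>G\<^esub> i \<otimes>\<^bsub>G\<^esub> coset_rep x) \<noteq> \<zero>\<^bsub>R\<^esub>"
      unfolding partial_sum_def using R.finsum_nonzero_term by blast
    have "h [^]\<^bsub>G\<^esub> i \<otimes>\<^bsub>G\<^esub> coset_rep x \<in> H #>\<^bsub>G\<^esub> coset_rep x"
      using G.rcosI[OF h_pow_in_H H_subset coset_rep_closed[OF x]] .
    then have "H #>\<^bsub>G\<^esub> coset_rep x = H #>\<^bsub>G\<^esub> (h [^]\<^bsub>G\<^esub> i \<otimes>\<^bsub>G\<^esub> coset_rep x)"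
      using G.repr_independence[OF _ coset_rep_closed[OF x] subgroup_H] by blast
    then have "x \<in> H #>\<^bsub>G\<^esub> (h [^]\<^bsub>G\<^esub> i \<otimes>\<^bsub>G\<^esub> coset_rep x)" using in_coset_rep[OF x] by simp
    then show "x \<in> (\<Union>z\<in>{z. a z \<noteq> \<zero>\<^bsub>R\<^esub>}. H #>\<^bsub>G\<^esub> z)" using i by blast
  qed
  moreover have "finite (\<Union>z\<in>{z. a z \<noteq> \<zero>\<^bsub>R\<^esub>}. H #>\<^bsub>G\<^esub> z)"
    using RG_finite_support[OF a] finite_H by (simp add: r_coset_eq_image)
  ultimately have "finite {x. u_antiderivative a x \<noteq> \<zero>\<^bsub>R\<^esub>}" by (rule finite_subset)
  then show ?thesis
    using partial_sum_closed[OF a] by (intro RG_memI) (simp_all add: u_antiderivative_def)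
qed

lemma u_mult_u_antiderivative:
  assumes a: "a \<in> carrier RG" and Na: "N \<otimes>\<^bsub>RG\<^esub> a = \<zero>\<^bsub>RG\<^esub>"
  shows "u \<otimes>\<^bsub>RG\<^esub> u_antiderivative a = a"
proof
  fix x
  have ac: "\<And>y. a y \<in> carrier R" using RG_coeff_closed[OF a] .
  let ?S = "partial_sum a"
  have S: "?S t j \<in> carrier R" for t j using partial_sum_closed[OF a] .
  show "(u \<otimes>\<^bsub>RG\<^esub> u_antiderivative a) x = a x"
  proof (cases "x \<in> carrier G")
    case False
    then show ?thesis using RG_coeff_outside[OF a] by (simp add: RG_simps(2))
  next
    case x: True
    define t where "t = coset_rep x"
    have t: "t \<in> carrier G" using coset_rep_closed[OF x] by (simp add: t_def)
    have hx: "inv\<^bsub>G\<^esub> h \<otimes>\<^bsub>G\<^esub> x \<in> carrier G" using x h_closed by simp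
    have ub: "(u \<otimes>\<^bsub>RG\<^esub> u_antiderivative a) x
        = \<ominus>\<^bsub>R\<^esub> ?S t (coset_exp (inv\<^bsub>G\<^esub> h \<otimes>\<^bsub>G\<^esub> x)) \<ominus>\<^bsub>R\<^esub> \<ominus>\<^bsub>R\<^esub> ?S t (coset_exp x)"
      using u_mult[OF u_antiderivative_closed[OF a] x] hx x coset_rep_inv_h_mult[OF x]
      by (simp add: u_antiderivative_def t_def)
    show ?thesis
    proof (cases "coset_exp x")
      case 0
      then have "t = x" using coset_exp(2)[OF x] t by (simp add: t_def)
      have "{..<p} = insert 0 {1..p - 1}" using p_ge_2 by auto
      then have "a (h [^]\<^bsub>G\<^esub> (0::nat) \<otimes>\<^bsub>G\<^esub> t) \<oplus>\<^bsub>R\<^esub> ?S t (p - 1) = \<zero>\<^bsub>R\<^esub>"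
        using coset_sum_zero[OF a Na t] ac unfolding partial_sum_def by (simp add: R.finsum_insert)
      then have "\<ominus>\<^bsub>R\<^esub> ?S t (p - 1) = a x"
        using \<open>t = x\<close> t ac S R.minus_equality by simp
      moreover have "?S t 0 = \<zero>\<^bsub>R\<^esub>" by (simp add: partial_sum_def)
      ultimately show ?thesis using ub 0 coset_exp_inv_h_mult[OF x] S ac by (simp add: R.minus_eq)
    next
      case (Suc k)
      have "{1..Suc k} = insert (Suc k) {1..k}" by auto
      then have "?S t (Suc k) = a x \<oplus>\<^bsub>R\<^esub> ?S t k"
        using ac coset_exp(2)[OF x] Suc unfolding partial_sum_def by (simp add: R.finsum_insert t_def)
      then have "(u \<otimes>\<^bsub>RG\<^esub> u_antiderivative a) x = \<ominus>\<^bsub>R\<^esub> ?S t k \<oplus>\<^bsub>R\<^esub> (a x \<oplus>\<^bsub>R\<^esub> ?S t k)"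
        using ub Suc coset_exp_inv_h_mult[OF x] S ac by (simp add: R.minus_eq)
      also have "\<dots> = a x" using S ac
        by (simp add: R.a_assoc[symmetric] R.a_comm[of "\<ominus>\<^bsub>R\<^esub> ?S t k" "a x"]) (simp add: R.a_assoc R.l_neg)
      finally show ?thesis .
    qed
  qed
qed

lemma ker_N:
  assumes a: "a \<in> carrier RG" and Na: "N \<otimes>\<^bsub>RG\<^esub> a = \<zero>\<^bsub>RG\<^esub>"
  shows "\<exists>b\<in>carrier RG. a = u \<otimes>\<^bsub>RG\<^esub> b"
  using u_antiderivative_closed[OF a] u_mult_u_antiderivative[OF a Na] by metis

lemma group_ring_not_regular_coherent: "\<not> regular_coherent_ring RG"
  \<comment> \<open>The ring axioms of \<open>RG\<close> are never proved: if they failed, \<open>RG\<close> would not be regular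
     coherent by definition.\<close>
proof (cases "ring RG")
  case True
  show ?thesis
    by (rule not_regular_coherent_ringI[where \<phi> = augmentation and B = R])
       (fact True u_closed N_closed u_mult_N N_mult_u ker_u ker_N
          augmentation_ring_hom R.ring_axioms one_ne_zero augmentation_u augmentation_N)+
qed (simp add: regular_coherent_ring_def)

end

theorem lemma4p3:
  fixes G :: "'g monoid"
  assumes "group G"
    and "infinite (UNIV :: 'r set)"
    and "regular_coherent_group TYPE('r) G"
  shows "torsionfree G"
proof (rule ccontr)
  interpret G: group G by fact
  assume "\<not> torsionfree G"
  then obtain g and n :: nat
    where g: "g \<in> carrier G" "n > 0" "g [^]\<^bsub>G\<^esub> n = \<one>\<^bsub>G\<^esub>" "g \<noteq> \<one>\<^bsub>G\<^esub>"
    unfolding torsionfree_def by blast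
  then obtain h where h: "h \<in> carrier G" "prime (G.ord h)"
    using G.torsion_imp_prime_order_elem[OF g] by blast
  then obtain S :: "'r ring"
    where S: "field S" "finite (carrier S)" "add_pow S (G.ord h) \<one>\<^bsub>S\<^esub> = \<zero>\<^bsub>S\<^esub>"
    using infinite_type_has_prime_field[OF assms(2)] by blast
  interpret S: field S by (rule S(1))
  interpret prime_order_elem G S h "G.ord h"
    by unfold_locales (use h S(3) S.one_not_zero in auto)
  have "regular_coherent_ring (group_ring S G)"
    using assms(3) finite_field_regular[OF S(1,2)] unfolding regular_coherent_group_def by blast
  then show False using group_ring_not_regular_coherent by blast
qed

end
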